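(* Let $V$, $P$, $v_h$ and $\hat v_h^N$ be as in the context. Then for every integer $N\ge0$, $$\|v_h'-(\hat v_h^N)'\|_{L^2(\mathbb{T})}=O(h^{\frac{N+1}{2}})\quad\text{as }h\to0.$$
   Context: $\mathbb{T}=\mathbb{R}/\mathbb{Z}\cong[-\tfrac12,\tfrac12)$. $V:\mathbb{T}\to\mathbb{R}$ is smooth, symmetric, with a unique non-degenerate minimum at $0$. $\overline H(P)$ is the effective Hamiltonian: the unique constant $c$ for which $\tfrac12(P+\phi')^2+V=c$ has a periodic viscosity solution; $P_{crit}=\inf\{P:\overline H(P)>\min\overline H\}$, and $P>P_{crit}$ is fixed, so that $\overline H(P)>\max V$. For $h>0$, $v_h$ is a periodic solution of $-\tfrac h2v_h''+\tfrac12(P+v_h')^2+V=\overline H_h(P)$, where $\overline H_h(P)$ is the unique constant for which such a periodic solution exists. Put $p^+(x)=\sqrt{2(\overline H(P)-V(x))}>0$ and $\sigma_0=c/p^+$ with $\int_{\mathbb{T}}\sigma_0=1$. Define $\overline H_0=\overline H(P)$, $v_0(x)=\int_{-1/2}^x p^+(s)ds-P(x+\tfrac12)$, and inductively for $j\ge1$: $\overline H_j=\int_{\mathbb{T}}\big[-\tfrac12 v_{j-1}''+\tfrac12\sum_{i=1}^{j-1}v_i'v_{j-i}'\big]\sigma_0\,dx$, and $v_j$ a smooth periodic solution (unique up to additive constant) of $-\tfrac12v_{j-1}''+p^+v_j'+\tfrac12\sum_{i=1}^{j-1}v_i'v_{j-i}'=\overline H_j$. Set $\hat v_h^N=\sum_{j=0}^N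 h^jv_j$. *)

theory Defs
  imports "HOL-Analysis.Analysis" "HOL-Library.Landau_Symbols"
begin

definition tint :: "(real \<Rightarrow> real) \<Rightarrow> real" where
  "tint f = interval_lebesgue_integral lborel (ereal (-1/2)) (ereal (1/2)) f"

definition L2T :: "(real \<Rightarrow> real) \<Rightarrow> real" where
  "L2T f = sqrt (tint (\<lambda>x. (f x)\<^sup>2))"

definition periodic1 :: "(real \<Rightarrow> real) \<Rightarrow> bool" where
  "periodic1 f \<longleftrightarrow> (\<forall>x. f (x + 1) = f x)"

definition smooth :: "(real \<Rightarrow> real) \<Rightarrow> bool" where
  "smooth f \<longleftrightarrow> (\<forall>k x. ((deriv ^^ k) f has_real_derivative (deriv ^^ Suc k) f x) (at x))"

definition C1 :: "(real \<Rightarrow> real) \<Rightarrow> bool" where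
  "C1 \<phi> \<longleftrightarrow> (\<forall>y. (\<phi> has_real_derivative deriv \<phi> y) (at y)) \<and> continuous_on UNIV (deriv \<phi>)"

definition visc_sub :: "(real \<Rightarrow> real \<Rightarrow> real) \<Rightarrow> (real \<Rightarrow> real) \<Rightarrow> bool" where
  "visc_sub H u \<longleftrightarrow> continuous_on UNIV u \<and>
     (\<forall>\<phi> x. C1 \<phi> \<and> (\<exists>e>0. \<forall>y. dist y x < e \<longrightarrow> u y - \<phi> y \<le> u x - \<phi> x)
        \<longrightarrow> H x (deriv \<phi> x) \<le> 0)"

definition visc_super :: "(real \<Rightarrow> real \<Rightarrow> real) \<Rightarrow> (real \<Rightarrow> real) \<Rightarrow> bool" where
  "visc_super H u \<longleftrightarrow> continuous_on UNIV u \<and>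
     (\<forall>\<phi> x. C1 \<phi> \<and> (\<exists>e>0. \<forall>y. dist y x < e \<longrightarrow> u y - \<phi> y \<ge> u x - \<phi> x)
        \<longrightarrow> H x (deriv \<phi> x) \<ge> 0)"

definition visc_sol :: "(real \<Rightarrow> real \<Rightarrow> real) \<Rightarrow> (real \<Rightarrow> real) \<Rightarrow> bool" where
  "visc_sol H u \<longleftrightarrow> visc_sub H u \<and> visc_super H u"

definition effH :: "(real \<Rightarrow> real) \<Rightarrow> real \<Rightarrow> real" where
  "effH V P = (THE c. \<exists>\<phi>. periodic1 \<phi> \<and> visc_sol (\<lambda>x p. (P + p)\<^sup>2 / 2 + V x - c) \<phi>)"

definition Pcrit :: "(real \<Rightarrow> real) \<Rightarrow> real" where
  "Pcrit V = Inf {P. 0 \<le> P \<and> effH V P > Inf (range (effH V))}"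

definition pplus :: "(real \<Rightarrow> real) \<Rightarrow> real \<Rightarrow> real \<Rightarrow> real" where
  "pplus V P x = sqrt (2 * (effH V P - V x))"

definition sigma0 :: "(real \<Rightarrow> real) \<Rightarrow> real \<Rightarrow> real \<Rightarrow> real" where
  "sigma0 V P x = (1 / pplus V P x) / tint (\<lambda>y. 1 / pplus V P y)"

definition v0 :: "(real \<Rightarrow> real) \<Rightarrow> real \<Rightarrow> real \<Rightarrow> real" where
  "v0 V P x = interval_lebesgue_integral lborel (ereal (-1/2)) (ereal x) (pplus V P) - P * (x + 1/2)"

definition Hbar_j :: "(real \<Rightarrow> real) \<Rightarrow> real \<Rightarrow> (nat \<Rightarrow> real \<Rightarrow> real) \<Rightarrow> nat \<Rightarrow> real" where
  "Hbar_j V P v j = tint (\<lambda>x. (- (1/2) * deriv (deriv (v (j - 1))) x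
        + (1/2) * (\<Sum>i=1..j-1. deriv (v i) x * deriv (v (j - i)) x)) * sigma0 V P x)"

definition vhat :: "(nat \<Rightarrow> real \<Rightarrow> real) \<Rightarrow> nat \<Rightarrow> real \<Rightarrow> real \<Rightarrow> real" where
  "vhat v N h x = (\<Sum>j=0..N. h ^ j * v j x)"

end

theory Submission
  imports Defs
begin

(* With p\<^sup>+_c = sqrt (2 (c - V)), viscosity theory gives the effective Hamiltonian explicitly:
   it equals max V for |P| at most the mean of p\<^sup>+_{max V} (a kinked solution is glued from the
   two branches \<plusminus>p\<^sup>+), and otherwise it is the level c > max V at which p\<^sup>+_c has mean |P|.
   So Pcrit is that mean, and for P > Pcrit the corrector hierarchy starts from p\<^sup>+ > 0.

   Then q = P + v_h' solves the viscous Riccati equation -h/2 q' + q^2/2 + V = const exactly,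
   while Q = P + (vhat^N_h)' solves it up to O(h^(N+1)) by the choice of the correctors. At
   the extrema of q - Q the viscous term vanishes; as q and Q are positive with equal means,
   this maximum principle yields |q - Q| = O(h^(N+1)) uniformly, stronger than the L^2 claim. *)

section \<open>Integrals over the torus and periodic functions\<close>

lemma DERIV_continuous_on_UNIV:
  "(\<And>x. (f has_real_derivative f' x) (at x)) \<Longrightarrow> continuous_on UNIV f"
  by (meson DERIV_isCont continuous_at_imp_continuous_on)

lemma continuous_on_UNIV_integrable_on:
  "continuous_on UNIV (f :: real \<Rightarrow> real) \<Longrightarrow> f integrable_on {a..b}"
  by (rule integrable_continuous_real, rule continuous_on_subset, auto)

lemma interval_integral_has_real_derivative:
  fixes f :: "real \<Rightarrow> real"
  assumes cf: "continuous_on UNIV f"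
  shows "((\<lambda>u. LBINT y=ereal c..ereal u. f y) has_real_derivative f x) (at x)"
proof -
  define a where "a = min c x - 1"
  define b where "b = max c x + 1"
  have "((\<lambda>u. LBINT y=ereal c..ereal u. f y) has_vector_derivative f x) (at x within {a..b})"
    by (rule interval_integral_FTC2) (use cf continuous_on_subset in \<open>auto simp: a_def b_def\<close>)
  then have "((\<lambda>u. LBINT y=ereal c..ereal u. f y) has_vector_derivative f x) (at x within {a<..<b})"
    by (rule has_vector_derivative_within_subset) auto
  then have "((\<lambda>u. LBINT y=ereal c..ereal u. f y) has_vector_derivative f x) (at x)"
    by (subst (asm) has_vector_derivative_within_open) (auto simp: a_def b_def)
  then show ?thesis by (simp add: has_real_derivative_iff_has_vector_derivative)
qed

lemma interval_integral_FTC_UNIV: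
  fixes f F :: "real \<Rightarrow> real"
  assumes cf: "continuous_on UNIV f" and dF: "\<And>x. (F has_real_derivative f x) (at x)"
  shows "(LBINT x=ereal a..ereal b. f x) = F b - F a"
proof (rule interval_integral_FTC_finite)
  show "continuous_on {min a b..max a b} f" using cf continuous_on_subset by blast
  fix x show "(F has_vector_derivative f x) (at x within {min a b..max a b})"
    using dF[of x] by (simp add: has_real_derivative_iff_has_vector_derivative has_vector_derivative_at_within)
qed

lemma tint_FTC:
  fixes f F :: "real \<Rightarrow> real"
  assumes "continuous_on UNIV f" and "\<And>x. (F has_real_derivative f x) (at x)"
  shows "tint f = F (1/2) - F (-1/2)"
  unfolding tint_def using interval_integral_FTC_UNIV[OF assms, of "-1/2" "1/2"] by simp

lemma tint_eq_integral:
  fixes f :: "real \<Rightarrow> real"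
  assumes "continuous_on UNIV f"
  shows "tint f = integral {-1/2..1/2} f"
  unfolding tint_def
  by (simp, rule interval_integral_eq_integral)
     (auto intro: borel_integrable_atLeastAtMost' continuous_on_subset[OF assms])

lemma tint_mono:
  fixes f g :: "real \<Rightarrow> real"
  assumes "continuous_on UNIV f" "continuous_on UNIV g" "\<And>x. x \<in> {-1/2..1/2} \<Longrightarrow> f x \<le> g x"
  shows "tint f \<le> tint g"
  unfolding tint_eq_integral[OF assms(1)] tint_eq_integral[OF assms(2)]
  by (rule integral_le) (auto intro: continuous_on_UNIV_integrable_on assms)

lemma tint_const [simp]: "tint (\<lambda>x. c) = c"
  unfolding tint_def by simp

lemma tint_le_const:
  fixes f :: "real \<Rightarrow> real"
  assumes "continuous_on UNIV f" "\<And>x. x \<in> {-1/2..1/2} \<Longrightarrow> f x \<le> c"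
  shows "tint f \<le> c"
  using tint_mono[of f "\<lambda>x. c"] assms by simp

lemma tint_ge_const:
  fixes f :: "real \<Rightarrow> real"
  assumes "continuous_on UNIV f" "\<And>x. x \<in> {-1/2..1/2} \<Longrightarrow> c \<le> f x"
  shows "c \<le> tint f"
  using tint_mono[of "\<lambda>x. c" f] assms by simp

lemma tint_diff:
  fixes f g :: "real \<Rightarrow> real"
  assumes "continuous_on UNIV f" "continuous_on UNIV g"
  shows "tint (\<lambda>x. f x - g x) = tint f - tint g"
  using assms by (simp add: tint_eq_integral integral_diff continuous_on_UNIV_integrable_on continuous_on_diff)

lemma tint_add:
  fixes f g :: "real \<Rightarrow> real"
  assumes "continuous_on UNIV f" "continuous_on UNIV g"
  shows "tint (\<lambda>x. f x + g x) = tint f + tint g"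
  using assms by (simp add: tint_eq_integral integral_add continuous_on_UNIV_integrable_on continuous_on_add)

lemma tint_cmult:
  fixes f :: "real \<Rightarrow> real"
  assumes "continuous_on UNIV f"
  shows "tint (\<lambda>x. c * f x) = c * tint f"
  using assms by (simp add: tint_eq_integral continuous_on_UNIV_integrable_on continuous_on_mult)

lemma L2T_le:
  fixes f :: "real \<Rightarrow> real"
  assumes cf: "continuous_on UNIV f" and bound: "\<And>x. \<bar>f x\<bar> \<le> B"
  shows "L2T f \<le> B"
proof -
  have B: "0 \<le> B" using bound[of 0] by linarith
  have "tint (\<lambda>x. (f x)\<^sup>2) \<le> B\<^sup>2"
    by (rule tint_le_const) (use cf bound B in \<open>auto intro!: continuous_intros simp: abs_le_square_iff[symmetric]\<close>)
  then show ?thesis unfolding L2T_def using B real_sqrt_le_mono by fastforce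
qed

lemma add_one_shift_int:
  fixes f :: "real \<Rightarrow> real"
  assumes "\<And>y. f (y + 1) = f y + c"
  shows "f (y + real_of_int k) = f y + real_of_int k * c"
proof -
  have nat: "f (y + real n) = f y + real n * c" for y n
  proof (induct n arbitrary: y)
    case (Suc n)
    have "f (y + real (Suc n)) = f ((y + real n) + 1)" by (simp add: add_ac)
    also have "\<dots> = f y + real n * c + c" using assms Suc by simp
    finally show ?case by (simp add: algebra_simps)
  qed simp
  show ?thesis
  proof (cases "k \<ge> 0")
    case True
    then show ?thesis using nat[of y "nat k"] by simp
  next
    case False
    then show ?thesis using nat[of "y + real_of_int k" "nat (-k)"] by (simp add: algebra_simps)
  qed
qed

lemma periodic1_add_int: "periodic1 f \<Longrightarrow> f (x + real_of_int k) = f x"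
  using add_one_shift_int[of f 0] by (simp add: periodic1_def)

lemma periodic1_representative:
  assumes "periodic1 f"
  obtains y where "y \<in> {-1/2..1/2}" "f y = f x"
proof
  show "x - real_of_int \<lfloor>x + 1/2\<rfloor> \<in> {-1/2..1/2}"
    using of_int_floor_le[of "x + 1/2"] real_of_int_floor_add_one_gt[of "x + 1/2"]
    unfolding atLeastAtMost_iff by linarith
  show "f (x - real_of_int \<lfloor>x + 1/2\<rfloor>) = f x"
    using periodic1_add_int[OF assms, of "x - real_of_int \<lfloor>x + 1/2\<rfloor>" "\<lfloor>x + 1/2\<rfloor>"] by simp
qed

lemma periodic1_deriv: "periodic1 f \<Longrightarrow> periodic1 (deriv f)"
  unfolding periodic1_def
proof
  fix x assume "\<forall>x. f (x + 1) = f x"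
  then have "(\<lambda>y. f (y + 1)) = f" by auto
  moreover have "deriv f (x + 1) = deriv (\<lambda>y. f (y + 1)) x"
    unfolding deriv_def by (simp add: DERIV_shift[of f _ x 1])
  ultimately show "deriv f (x + 1) = deriv f x" by simp
qed

lemma periodic1_attains_max:
  fixes f :: "real \<Rightarrow> real"
  assumes "continuous_on UNIV f" "periodic1 f"
  obtains x0 where "\<And>x. f x \<le> f x0"
proof -
  have "continuous_on {-1/2..1/2::real} f" using assms(1) by (rule continuous_on_subset) simp
  then obtain x0 where x0: "\<forall>y\<in>{-1/2..1/2::real}. f y \<le> f x0"
    using continuous_attains_sup[OF compact_Icc, of "-1/2" "1/2" f] by auto
  have "f x \<le> f x0" for x
  proof -
    obtain y where "y \<in> {-1/2..1/2}" "f y = f x" using periodic1_representative[OF assms(2)] .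
    then show ?thesis using x0 by (metis atLeastAtMost_iff)
  qed
  then show thesis using that by blast
qed

lemma periodic1_attains_min:
  fixes f :: "real \<Rightarrow> real"
  assumes "continuous_on UNIV f" "periodic1 f"
  obtains x0 where "\<And>x. f x0 \<le> f x"
proof -
  have "continuous_on UNIV (\<lambda>x. - f x)" "periodic1 (\<lambda>x. - f x)"
    using assms by (auto intro: continuous_on_minus simp: periodic1_def)
  then obtain x0 where "\<And>x. - f x \<le> - f x0" by (rule periodic1_attains_max) blast
  then have "\<And>x. f x0 \<le> f x" by simp
  then show thesis by (rule that)
qed

lemma periodic1_bounded:
  fixes f :: "real \<Rightarrow> real"
  assumes "continuous_on UNIV f" "periodic1 f"
  obtains B where "\<And>x. \<bar>f x\<bar> \<le> B"
proof -
  obtain a b where "\<And>x. f x \<le> f a" "\<And>x. f b \<le> f x"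
    using periodic1_attains_max[OF assms] periodic1_attains_min[OF assms] by metis
  then have "\<bar>f x\<bar> \<le> max \<bar>f a\<bar> \<bar>f b\<bar>" for x by (smt (verit))
  then show thesis using that by blast
qed

lemma periodic1_interval_integral:
  fixes f :: "real \<Rightarrow> real"
  assumes cf: "continuous_on UNIV f" and p: "periodic1 f"
  shows "(LBINT x=ereal y..ereal (y+1). f x) = tint f"
proof -
  define F where "F u = (LBINT x=ereal 0..ereal u. f x)" for u
  have dF: "(F has_real_derivative f x) (at x)" for x
    unfolding F_def by (rule interval_integral_has_real_derivative[OF cf])
  have "((\<lambda>u. F (u + 1) - F u) has_real_derivative f (x + 1) - f x) (at x)" for x
    using DERIV_shift[of F "f (x+1)" x 1] dF[of "x+1"] by (intro DERIV_diff dF) simp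
  then have "((\<lambda>u. F (u + 1) - F u) has_real_derivative 0) (at x)" for x
    using p by (simp add: periodic1_def)
  then have "F (y + 1) - F y = F (-1/2 + 1) - F (-1/2)"
    using DERIV_isconst_all[of "\<lambda>u. F (u + 1) - F u"] by blast
  then show ?thesis
    using interval_integral_FTC_UNIV[OF cf dF] tint_FTC[OF cf dF] by simp
qed

lemma smooth_has_real_derivative: "smooth f \<Longrightarrow> (f has_real_derivative deriv f x) (at x)"
proof -
  assume "smooth f"
  then have "((deriv ^^ 0) f has_real_derivative (deriv ^^ Suc 0) f x) (at x)"
    unfolding smooth_def by blast
  then show ?thesis by simp
qed

lemma smooth_deriv: "smooth f \<Longrightarrow> smooth (deriv f)"
  unfolding smooth_def
proof (intro allI)
  fix k x assume "\<forall>k x. ((deriv ^^ k) f has_real_derivative (deriv ^^ Suc k) f x) (at x)"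
  then have "((deriv ^^ Suc k) f has_real_derivative (deriv ^^ Suc (Suc k)) f x) (at x)" by blast
  then show "((deriv ^^ k) (deriv f) has_real_derivative (deriv ^^ Suc k) (deriv f) x) (at x)"
    by (simp only: funpow_Suc_right comp_apply)
qed

lemma C1_continuous_on: "C1 \<phi> \<Longrightarrow> continuous_on UNIV \<phi>"
  unfolding C1_def by (meson DERIV_continuous_on_UNIV)

lemma smooth_imp_C1: "smooth f \<Longrightarrow> C1 f"
  unfolding C1_def
  using DERIV_continuous_on_UNIV[OF smooth_has_real_derivative[OF smooth_deriv]]
    smooth_has_real_derivative by blast

lemma abs_sqrt_diff_le: "0 \<le> a \<Longrightarrow> 0 \<le> b \<Longrightarrow> \<bar>sqrt a - sqrt b\<bar> \<le> sqrt \<bar>a - b\<bar>"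
proof -
  have main: "sqrt a - sqrt b \<le> sqrt \<bar>a - b\<bar>" if "0 \<le> a" "0 \<le> b" for a b :: real
  proof (cases "b \<le> a")
    case True
    have "(sqrt b + sqrt (a - b))\<^sup>2 = b + (a - b) + 2 * sqrt b * sqrt (a - b)"
      using that True by (simp add: power2_eq_square algebra_simps)
    also have "\<dots> \<ge> a" using that True by simp
    finally have X: "a \<le> (sqrt b + sqrt (a - b))\<^sup>2" .
    have "sqrt a \<le> sqrt b + sqrt (a - b)"
      using real_sqrt_le_mono[OF X] True that by simp
    then show ?thesis using True by simp
  next
    case False
    then have "sqrt a \<le> sqrt b" by simp
    then show ?thesis by (smt (verit) real_sqrt_ge_zero)
  qed
  assume "0 \<le> a" "0 \<le> b"
  then show ?thesis using main[of a b] main[of b a] by (simp add: abs_minus_commute abs_le_iff)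
qed
lemma sqrt_diff_ge: "0 \<le> a \<Longrightarrow> a < b \<Longrightarrow> (b - a) / (2 * sqrt b) \<le> sqrt b - sqrt a"
proof -
  assume h: "0 \<le> a" "a < b"
  then have sb: "sqrt b > 0" by simp
  have "(sqrt b - sqrt a) * (sqrt b + sqrt a) = b - a" using h by (simp add: algebra_simps)
  moreover have "sqrt b + sqrt a \<le> 2 * sqrt b" using h by simp
  moreover have "sqrt b - sqrt a \<ge> 0" using h by simp
  ultimately have "b - a \<le> (sqrt b - sqrt a) * (2 * sqrt b)" by (metis mult_left_mono)
  then show ?thesis using sb by (simp add: divide_le_eq mult.commute)
qed

lemma DERIV_le_0_of_left_min:
  fixes g :: "real \<Rightarrow> real"
  assumes dg: "(g has_real_derivative d) (at x)" and e: "e > 0"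
    and left: "\<And>h. 0 < h \<Longrightarrow> h < e \<Longrightarrow> g x \<le> g (x - h)"
  shows "d \<le> 0"
proof (rule ccontr)
  assume "\<not> d \<le> 0"
  then obtain d' where d': "d' > 0" "\<forall>h>0. h < d' \<longrightarrow> g (x - h) < g x"
    using DERIV_pos_inc_left[OF dg] by force
  define h where "h = min d' e / 2"
  have "0 < h" "h < d'" "h < e" using d' e unfolding h_def by (auto simp: min_def)
  then show False using d'(2) left by force
qed

lemma DERIV_ge_0_of_right_min:
  fixes g :: "real \<Rightarrow> real"
  assumes dg: "(g has_real_derivative d) (at x)" and e: "e > 0"
    and right: "\<And>h. 0 < h \<Longrightarrow> h < e \<Longrightarrow> g x \<le> g (x + h)"
  shows "0 \<le> d"
proof (rule ccontr)
  assume "\<not> 0 \<le> d"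
  then obtain d' where d': "d' > 0" "\<forall>h>0. h < d' \<longrightarrow> g (x + h) < g x"
    using DERIV_neg_dec_right[OF dg] by force
  define h where "h = min d' e / 2"
  have "0 < h" "h < d'" "h < e" using d' e unfolding h_def by (auto simp: min_def)
  then show False using d'(2) right by force
qed
section \<open>Viscosity solutions on the circle\<close>

lemma visc_sol_classical:
  assumes du: "\<And>x. (u has_real_derivative u' x) (at x)"
    and H0: "\<And>x. H x (u' x) = 0"
  shows "visc_sol H u"
proof -
  have d: "((\<lambda>y. u y - \<phi> y) has_real_derivative u' x - deriv \<phi> x) (at x)" if "C1 \<phi>" for \<phi> x
    using that du[of x] unfolding C1_def by (intro DERIV_diff) auto
  show ?thesis
    unfolding visc_sol_def visc_sub_def visc_super_def
  proof (intro conjI DERIV_continuous_on_UNIV[OF du] allI impI)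
    fix \<phi> x assume h: "C1 \<phi> \<and> (\<exists>e>0. \<forall>y. dist y x < e \<longrightarrow> u y - \<phi> y \<le> u x - \<phi> x)"
    then obtain e where e: "e > 0" "\<forall>y. \<bar>x - y\<bar> < e \<longrightarrow> u y - \<phi> y \<le> u x - \<phi> x"
      by (auto simp: dist_real_def abs_minus_commute)
    have "u' x - deriv \<phi> x = 0" by (rule DERIV_local_max[OF d e]) (use h in auto)
    then show "H x (deriv \<phi> x) \<le> 0" using H0[of x] by simp
  next
    fix \<phi> x assume h: "C1 \<phi> \<and> (\<exists>e>0. \<forall>y. dist y x < e \<longrightarrow> u x - \<phi> x \<le> u y - \<phi> y)"
    then obtain e where e: "e > 0" "\<forall>y. \<bar>x - y\<bar> < e \<longrightarrow> u x - \<phi> x \<le> u y - \<phi> y"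
      by (auto simp: dist_real_def abs_minus_commute)
    have "u' x - deriv \<phi> x = 0" by (rule DERIV_local_min[OF d e]) (use h in auto)
    then show "H x (deriv \<phi> x) \<ge> 0" using H0[of x] by simp
  qed
qed

lemma visc_super_excludes_strict_subsolution:
  assumes "visc_super H u" "periodic1 u" "C1 \<phi>" "periodic1 \<phi>" "\<And>x. H x (deriv \<phi> x) < 0"
  shows False
proof -
  have c: "continuous_on UNIV (\<lambda>x. u x - \<phi> x)"
    using assms(1,3) C1_continuous_on unfolding visc_super_def by (intro continuous_on_diff) auto
  have p: "periodic1 (\<lambda>x. u x - \<phi> x)" using assms(2,4) by (simp add: periodic1_def)
  obtain x where x: "\<And>y. u x - \<phi> x \<le> u y - \<phi> y" using periodic1_attains_min[OF c p] by blast
  have "H x (deriv \<phi> x) \<ge> 0"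
    using assms(1,3) x unfolding visc_super_def by (meson zero_less_one)
  then show False using assms(5)[of x] by simp
qed

lemma visc_sub_excludes_strict_supersolution:
  assumes "visc_sub H u" "periodic1 u" "C1 \<phi>" "periodic1 \<phi>" "\<And>x. H x (deriv \<phi> x) > 0"
  shows False
proof -
  have c: "continuous_on UNIV (\<lambda>x. u x - \<phi> x)"
    using assms(1,3) C1_continuous_on unfolding visc_sub_def by (intro continuous_on_diff) auto
  have p: "periodic1 (\<lambda>x. u x - \<phi> x)" using assms(2,4) by (simp add: periodic1_def)
  obtain x where x: "\<And>y. u y - \<phi> y \<le> u x - \<phi> x" using periodic1_attains_max[OF c p] by blast
  have "H x (deriv \<phi> x) \<le> 0"
    using assms(1,3) x unfolding visc_sub_def by (meson zero_less_one)
  then show False using assms(5)[of x] by simp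
qed

lemma periodic_C1_primitive:
  fixes g :: "real \<Rightarrow> real"
  assumes cg: "continuous_on UNIV g" and pg: "periodic1 g"
  obtains \<phi> where "C1 \<phi>" "periodic1 \<phi>" "\<And>x. deriv \<phi> x = g x - tint g"
proof -
  define \<phi> where "\<phi> x = (LBINT t=ereal 0..ereal x. g t - tint g)" for x
  have cg': "continuous_on UNIV (\<lambda>t. g t - tint g)" using cg by (intro continuous_intros)
  have d: "(\<phi> has_real_derivative g x - tint g) (at x)" for x
    unfolding \<phi>_def by (rule interval_integral_has_real_derivative[OF cg'])
  have dd: "deriv \<phi> x = g x - tint g" for x using d by (rule DERIV_imp_deriv)
  have pg': "periodic1 (\<lambda>t. g t - tint g)" using pg by (simp add: periodic1_def)
  have "\<phi> (x + 1) - \<phi> x = tint (\<lambda>t. g t - tint g)" for x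
    using interval_integral_FTC_UNIV[OF cg' d, of x "x+1"] periodic1_interval_integral[OF cg' pg', of x]
    by simp
  also have "tint (\<lambda>t. g t - tint g) = 0" using tint_diff[OF cg, of "\<lambda>t. tint g"] by simp
  finally have "periodic1 \<phi>" by (simp add: periodic1_def)
  moreover have "C1 \<phi>" unfolding C1_def using d dd cg' by simp
  ultimately show thesis using that dd by blast
qed

section \<open>The effective Hamiltonian of a periodic potential\<close>

(* For |Q| \<le> p the upper envelope of the tents is a zigzag with slopes \<plusminus>1 which rises by Q
   over every period p; composed with the action it gives the periodic viscosity solution on
   the flat part of the effective Hamiltonian. *)
definition tent :: "real \<Rightarrow> real \<Rightarrow> int \<Rightarrow> real \<Rightarrow> real" where
  "tent p Q k a = real_of_int k * Q + min (a - real_of_int k * p) ((real_of_int k + 1) * p + Q - a)"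

definition sawtooth :: "real \<Rightarrow> real \<Rightarrow> real \<Rightarrow> real" where
  "sawtooth p Q a = tent p Q \<lfloor>a / p\<rfloor> a"

lemma tent_le_own_cell:
  assumes p: "p > 0" and Q: "\<bar>Q\<bar> \<le> p"
    and a: "real_of_int k * p \<le> a" "a \<le> (real_of_int k + 1) * p"
  shows "tent p Q j a \<le> tent p Q k a"
proof (cases "j > k")
  case True
  define jr where "jr = real_of_int j"
  define kr where "kr = real_of_int k"
  have jk: "jr \<ge> kr + 1" using True unfolding jr_def kr_def by linarith
  have m: "(jr - (kr + 1)) * (Q - p) \<le> 0" using jk Q by (intro mult_nonneg_nonpos) auto
  have "tent p Q j a \<le> jr * Q + (a - jr * p)" unfolding tent_def jr_def by simp
  also have "\<dots> \<le> a + (kr + 1) * (Q - p)" using m by (simp add: algebra_simps)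
  also have "\<dots> \<le> tent p Q k a" unfolding tent_def kr_def[symmetric]
    using a Q unfolding kr_def[symmetric] by (simp add: algebra_simps)
  finally show ?thesis .
next
  case False
  show ?thesis
  proof (cases "j = k")
    case False
    define jr where "jr = real_of_int j"
    define kr where "kr = real_of_int k"
    have jk: "jr + 1 \<le> kr" using False \<open>\<not> j > k\<close> unfolding jr_def kr_def by linarith
    have m: "(kr - (jr + 1)) * (Q + p) \<ge> 0" using jk Q by (intro mult_nonneg_nonneg) auto
    have "tent p Q j a \<le> jr * Q + ((jr + 1) * p + Q - a)" unfolding tent_def jr_def by simp
    also have "\<dots> \<le> kr * (Q + p) - a" using m by (simp add: algebra_simps)
    also have "\<dots> \<le> tent p Q k a" unfolding tent_def kr_def[symmetric]
      using a Q unfolding kr_def[symmetric] by (simp add: algebra_simps)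
    finally show ?thesis .
  qed simp
qed

lemma tent_le_sawtooth:
  assumes p: "p > 0" and Q: "\<bar>Q\<bar> \<le> p"
  shows "tent p Q j a \<le> sawtooth p Q a"
  unfolding sawtooth_def
  using tent_le_own_cell[OF p Q floor_divide_lower[OF p] less_imp_le[OF floor_divide_upper[OF p]]]
  by (simp add: algebra_simps)

lemma tent_lipschitz: "\<bar>tent p Q k a - tent p Q k b\<bar> \<le> \<bar>a - b\<bar>"
  unfolding tent_def by (simp add: min_def abs_if)

lemma sawtooth_lipschitz:
  assumes p: "p > 0" and Q: "\<bar>Q\<bar> \<le> p"
  shows "\<bar>sawtooth p Q a - sawtooth p Q b\<bar> \<le> \<bar>a - b\<bar>"
proof -
  have one_side: "sawtooth p Q a - sawtooth p Q b \<le> \<bar>a - b\<bar>" for a b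
  proof -
    have "sawtooth p Q a - sawtooth p Q b \<le> tent p Q \<lfloor>a / p\<rfloor> a - tent p Q \<lfloor>a / p\<rfloor> b"
      using tent_le_sawtooth[OF p Q, of "\<lfloor>a / p\<rfloor>" b] unfolding sawtooth_def by simp
    also have "\<dots> \<le> \<bar>a - b\<bar>" using tent_lipschitz[of p Q "\<lfloor>a / p\<rfloor>" a b] by simp
    finally show ?thesis .
  qed
  show ?thesis using one_side[of a b] one_side[of b a] by (simp add: abs_le_iff abs_minus_commute)
qed

lemma sawtooth_continuous:
  assumes p: "p > 0" and Q: "\<bar>Q\<bar> \<le> p"
  shows "continuous_on UNIV (sawtooth p Q)"
  unfolding continuous_on_iff
proof (intro ballI allI impI)
  fix a e assume "(0::real) < e"
  then show "\<exists>d>0. \<forall>b\<in>UNIV. dist b a < d \<longrightarrow> dist (sawtooth p Q b) (sawtooth p Q a) < e"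
    using sawtooth_lipschitz[OF p Q] by (intro exI[of _ e]) (auto simp: dist_real_def intro: le_less_trans)
qed

lemma sawtooth_shift:
  assumes p: "p > 0"
  shows "sawtooth p Q (a + p) = sawtooth p Q a + Q"
proof -
  have "(a + p) / p = a / p + 1" using p by (simp add: field_simps)
  then have f: "\<lfloor>(a + p) / p\<rfloor> = \<lfloor>a / p\<rfloor> + 1" by simp
  show ?thesis unfolding sawtooth_def tent_def f by (simp add: algebra_simps)
qed

lemma sawtooth_locally_below_slope:
  assumes p: "p > 0" and a: "real_of_int \<lfloor>a / p\<rfloor> * p < a"
  obtains \<sigma> d where "\<bar>\<sigma>\<bar> = 1" "d > 0"
    "\<And>b. \<bar>b - a\<bar> < d \<Longrightarrow> sawtooth p Q b \<le> sawtooth p Q a + \<sigma> * (b - a)"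
proof -
  define k where "k = \<lfloor>a / p\<rfloor>"
  have a1: "real_of_int k * p < a" "a < (real_of_int k + 1) * p"
    using a floor_divide_upper[OF p, of a] unfolding k_def by (auto simp: algebra_simps)
  define d where "d = min (a - real_of_int k * p) ((real_of_int k + 1) * p - a)"
  have d: "d > 0" unfolding d_def using a1 by simp
  have same_cell: "\<lfloor>b / p\<rfloor> = k" if "\<bar>b - a\<bar> < d" for b
    using that p unfolding d_def
    by (auto simp: floor_eq_iff pos_le_divide_eq pos_divide_less_eq abs_less_iff)
  show thesis
  proof (cases "a - real_of_int k * p \<le> (real_of_int k + 1) * p + Q - a")
    case True
    have "sawtooth p Q b \<le> sawtooth p Q a + 1 * (b - a)" if "\<bar>b - a\<bar> < d" for b
      unfolding sawtooth_def same_cell[OF that] k_def[symmetric] tent_def using True by (simp add: min_def)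
    then show thesis using that[of 1] d by simp
  next
    case False
    have "sawtooth p Q b \<le> sawtooth p Q a + (-1) * (b - a)" if "\<bar>b - a\<bar> < d" for b
      unfolding sawtooth_def same_cell[OF that] k_def[symmetric] tent_def using False by (simp add: min_def)
    then show thesis using that[of "-1"] d by simp
  qed
qed
lemma penalized_max_near_center:
  fixes u :: "real \<Rightarrow> real"
  assumes cu: "continuous_on UNIV u" and B: "\<And>x. \<bar>u x\<bar> \<le> B"
    and \<delta>: "\<delta> > 0" and \<kappa>: "2 * B < \<kappa> * \<delta>\<^sup>2"
  obtains y0 where "\<bar>y0 - x0\<bar> < \<delta>" "\<And>y. u y - \<kappa> * (y - x0)\<^sup>2 \<le> u y0 - \<kappa> * (y0 - x0)\<^sup>2"
proof -
  define g where "g y = u y - \<kappa> * (y - x0)\<^sup>2" for y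
  have "continuous_on {x0 - \<delta>..x0 + \<delta>} g"
    unfolding g_def by (intro continuous_intros continuous_on_subset[OF cu]) auto
  then obtain y0 where y0: "y0 \<in> {x0 - \<delta>..x0 + \<delta>}" "\<forall>y\<in>{x0 - \<delta>..x0 + \<delta>}. g y \<le> g y0"
    using continuous_attains_sup[OF compact_Icc, of "x0 - \<delta>" "x0 + \<delta>" g] \<delta> by auto
  have center: "- B \<le> g y0"
    using y0(2)[rule_format, of x0] \<delta> B[of x0] unfolding g_def by simp
  have "0 \<le> B" using B[of x0] by linarith
  then have "0 < \<kappa> * \<delta>\<^sup>2" using \<kappa> by linarith
  then have \<kappa>_pos: "\<kappa> > 0" using \<delta> by (simp add: zero_less_mult_iff)
  have far: "g y < - B" if "\<delta> \<le> \<bar>y - x0\<bar>" for y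
  proof -
    have "\<delta>\<^sup>2 \<le> (y - x0)\<^sup>2" using that \<delta> by (metis abs_le_square_iff abs_of_pos)
    then have "\<kappa> * \<delta>\<^sup>2 \<le> \<kappa> * (y - x0)\<^sup>2" using \<kappa>_pos by simp
    then show ?thesis unfolding g_def using B[of y] \<kappa> by (simp add: abs_le_iff)
  qed
  show thesis
  proof
    show "\<bar>y0 - x0\<bar> < \<delta>" using far[of y0] center by linarith
    fix y show "u y - \<kappa> * (y - x0)\<^sup>2 \<le> u y0 - \<kappa> * (y0 - x0)\<^sup>2"
    proof (cases "\<bar>y - x0\<bar> < \<delta>")
      case True
      then have "y \<in> {x0 - \<delta>..x0 + \<delta>}" by (auto simp: abs_less_iff)
      then show ?thesis using y0(2) unfolding g_def by blast
    next
      case False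
      then show ?thesis using far[of y] center unfolding g_def by simp
    qed
  qed
qed

locale periodic_potential =
  fixes V :: "real \<Rightarrow> real"
  assumes V_continuous: "continuous_on UNIV V"
    and V_periodic: "periodic1 V"
    and V_nonconstant: "\<exists>x y. V x \<noteq> V y"
begin

definition xmax :: real where "xmax = (SOME x. \<forall>y. V y \<le> V x)"

definition Vmax :: real where "Vmax = V xmax"

lemma V_le_Vmax: "V y \<le> Vmax"
proof -
  have "\<exists>x. \<forall>y. V y \<le> V x" using periodic1_attains_max[OF V_continuous V_periodic] by metis
  then have "\<forall>y. V y \<le> V xmax" unfolding xmax_def by (rule someI_ex)
  then show ?thesis unfolding Vmax_def by blast
qed

(* momentum c is the p\<^sup>+ of the paper at energy level c \<ge> Vmax. The effective Hamiltonian
   equals Vmax for |P| \<le> Pflat and inverts avg_momentum beyond. *)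
definition momentum :: "real \<Rightarrow> real \<Rightarrow> real" where
  "momentum c x = sqrt (2 * (c - V x))"

definition avg_momentum :: "real \<Rightarrow> real" where
  "avg_momentum c = tint (momentum c)"

definition Pflat :: real where
  "Pflat = avg_momentum Vmax"

lemma momentum_continuous: "continuous_on UNIV (momentum c)"
  unfolding momentum_def by (intro continuous_intros V_continuous)

lemma momentum_periodic: "periodic1 (momentum c)"
  using V_periodic by (simp add: periodic1_def momentum_def)

lemma momentum_nonneg: "Vmax \<le> c \<Longrightarrow> 0 \<le> momentum c x"
  using V_le_Vmax[of x] by (simp add: momentum_def)

lemma momentum_square: "Vmax \<le> c \<Longrightarrow> (momentum c x)\<^sup>2 = 2 * (c - V x)"
  using V_le_Vmax[of x] by (simp add: momentum_def)

lemma avg_momentum_ge: "Vmax \<le> c \<Longrightarrow> sqrt (2 * (c - Vmax)) \<le> avg_momentum c"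
  unfolding avg_momentum_def
  by (rule tint_ge_const[OF momentum_continuous]) (use V_le_Vmax in \<open>auto simp: momentum_def\<close>)

lemma avg_momentum_diff_le:
  assumes "Vmax \<le> c" "Vmax \<le> c'"
  shows "\<bar>avg_momentum c - avg_momentum c'\<bar> \<le> sqrt (2 * \<bar>c - c'\<bar>)"
proof -
  have b: "\<bar>momentum c x - momentum c' x\<bar> \<le> sqrt (2 * \<bar>c - c'\<bar>)" for x
  proof -
    have "\<bar>momentum c x - momentum c' x\<bar> \<le> sqrt \<bar>2 * (c - V x) - 2 * (c' - V x)\<bar>"
      unfolding momentum_def by (rule abs_sqrt_diff_le) (use assms V_le_Vmax[of x] in auto)
    also have "2 * (c - V x) - 2 * (c' - V x) = 2 * (c - c')" by (simp add: algebra_simps)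
    also have "\<bar>2 * (c - c')\<bar> = 2 * \<bar>c - c'\<bar>" by (simp only: abs_mult)
    finally show ?thesis .
  qed
  have c: "continuous_on UNIV (\<lambda>x. momentum c x - momentum c' x)"
    by (intro continuous_intros momentum_continuous)
  have "avg_momentum c - avg_momentum c' = tint (\<lambda>x. momentum c x - momentum c' x)"
    unfolding avg_momentum_def by (simp add: tint_diff momentum_continuous)
  moreover have "tint (\<lambda>x. momentum c x - momentum c' x) \<le> sqrt (2 * \<bar>c - c'\<bar>)"
    by (rule tint_le_const[OF c]) (use b in \<open>auto simp: abs_le_iff\<close>)
  moreover have "- sqrt (2 * \<bar>c - c'\<bar>) \<le> tint (\<lambda>x. momentum c x - momentum c' x)"
  proof (rule tint_ge_const[OF c])
    fix x show "- sqrt (2 * \<bar>c - c'\<bar>) \<le> momentum c x - momentum c' x"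
      using b[of x] by (simp add: abs_le_iff)
  qed
  ultimately show ?thesis by (simp add: abs_le_iff)
qed

lemma avg_momentum_continuous: "continuous_on {Vmax..} avg_momentum"
  unfolding continuous_on_iff
proof (intro ballI allI impI)
  fix c e assume c: "c \<in> {Vmax..}" and e: "(0::real) < e"
  show "\<exists>d>0. \<forall>c'\<in>{Vmax..}. dist c' c < d \<longrightarrow> dist (avg_momentum c') (avg_momentum c) < e"
  proof (intro exI[of _ "e\<^sup>2 / 2"] conjI ballI impI)
    show "0 < e\<^sup>2 / 2" using e by simp
    fix c' assume c': "c' \<in> {Vmax..}" "dist c' c < e\<^sup>2 / 2"
    have "dist (avg_momentum c') (avg_momentum c) \<le> sqrt (2 * \<bar>c' - c\<bar>)"
      using avg_momentum_diff_le[of c' c] c c' by (simp add: dist_real_def)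
    also have "\<dots> < sqrt (e\<^sup>2)"
      using c' by (intro real_sqrt_less_mono) (simp add: dist_real_def abs_minus_commute)
    also have "\<dots> = e" using e by simp
    finally show "dist (avg_momentum c') (avg_momentum c) < e" .
  qed
qed

lemma avg_momentum_strict_mono:
  assumes h: "Vmax \<le> c" "c < c'"
  shows "avg_momentum c < avg_momentum c'"
proof -
  obtain xmin where m: "\<And>x. V xmin \<le> V x"
    using periodic1_attains_min[OF V_continuous V_periodic] by blast
  define K where "K = sqrt (2 * (c' - V xmin))"
  have Kpos: "K > 0" unfolding K_def using V_le_Vmax[of xmin] h by simp
  define d where "d = 2 * (c' - c) / (2 * K)"
  have dpos: "d > 0" unfolding d_def using Kpos h by simp
  have "momentum c' x - momentum c x \<ge> d" for x
  proof -
    have "momentum c' x - momentum c x \<ge> (2 * (c' - V x) - 2 * (c - V x)) / (2 * sqrt (2 * (c' - V x)))"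
      unfolding momentum_def by (rule sqrt_diff_ge) (use h V_le_Vmax[of x] in auto)
    moreover have "sqrt (2 * (c' - V x)) \<le> K" unfolding K_def using m[of x] by simp
    moreover have "sqrt (2 * (c' - V x)) > 0" using h V_le_Vmax[of x] by simp
    ultimately show ?thesis unfolding d_def using h
      by (smt (verit, best) divide_left_mono mult_pos_pos frac_le)
  qed
  then have "d \<le> tint (\<lambda>x. momentum c' x - momentum c x)"
    by (intro tint_ge_const) (auto intro!: continuous_intros momentum_continuous)
  then show ?thesis unfolding avg_momentum_def using dpos by (simp add: tint_diff momentum_continuous)
qed

lemma Pflat_pos: "0 < Pflat"
proof (rule ccontr)
  assume "\<not> 0 < Pflat"
  then have "integral {-1/2..1/2} (momentum Vmax) = 0"
    using avg_momentum_ge[of Vmax]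
    unfolding Pflat_def avg_momentum_def tint_eq_integral[OF momentum_continuous] by simp
  then have "\<forall>x\<in>cbox (-1/2) (1/2). momentum Vmax x = 0"
    using integral_cbox_eq_0_iff[of "-1/2" "1/2::real" "momentum Vmax"]
      momentum_continuous[of Vmax] momentum_nonneg[of Vmax]
    by (auto intro: continuous_on_subset)
  then have flat: "V y = Vmax" if "y \<in> {-1/2..1/2}" for y
    using that V_le_Vmax[of y] by (simp add: momentum_def)
  have "V x = Vmax" for x
    using periodic1_representative[OF V_periodic, of x] flat by metis
  then show False using V_nonconstant by simp
qed

lemma avg_momentum_pos: "Vmax < c \<Longrightarrow> 0 < avg_momentum c"
  using avg_momentum_strict_mono[of Vmax c] Pflat_pos unfolding Pflat_def by simp

lemma avg_momentum_attains:
  assumes "Pflat < \<bar>Q\<bar>"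
  obtains c where "Vmax < c" "avg_momentum c = \<bar>Q\<bar>"
proof -
  have "avg_momentum Vmax \<le> \<bar>Q\<bar>" using assms unfolding Pflat_def by simp
  moreover have "\<bar>Q\<bar> \<le> avg_momentum (Vmax + Q\<^sup>2 / 2)" using avg_momentum_ge[of "Vmax + Q\<^sup>2/2"] by simp
  moreover have "continuous_on {Vmax..Vmax + Q\<^sup>2 / 2} avg_momentum"
    by (rule continuous_on_subset[OF avg_momentum_continuous]) auto
  ultimately obtain c where c: "Vmax \<le> c" "c \<le> Vmax + Q\<^sup>2 / 2" "avg_momentum c = \<bar>Q\<bar>"
    using IVT'[of avg_momentum Vmax "\<bar>Q\<bar>" "Vmax + Q\<^sup>2/2"] by auto
  then have "c \<noteq> Vmax" using assms unfolding Pflat_def by auto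
  then have "Vmax < c" using c(1) by simp
  then show thesis using that c(3) by blast
qed

lemma visc_sub_level_ge_Vmax:
  assumes sub: "visc_sub (\<lambda>x p. (Q + p)\<^sup>2 / 2 + V x - c) u" and pu: "periodic1 u"
  shows "Vmax \<le> c"
proof (rule ccontr)
  assume "\<not> Vmax \<le> c"
  then have cM: "c < Vmax" by simp
  obtain \<delta> where \<delta>: "\<delta> > 0" "\<forall>y. dist y xmax < \<delta> \<longrightarrow> dist (V y) (V xmax) < Vmax - c"
    using V_continuous cM unfolding continuous_on_iff by (metis UNIV_I diff_gt_0_iff_gt)
  have V_big: "c < V y" if "\<bar>y - xmax\<bar> < \<delta>" for y
    using \<delta>(2)[rule_format, of y] that by (auto simp: dist_real_def Vmax_def)
  have cu: "continuous_on UNIV u" using sub unfolding visc_sub_def by blast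
  obtain B where B: "\<And>x. \<bar>u x\<bar> \<le> B" using periodic1_bounded[OF cu pu] by blast
  define \<kappa> where "\<kappa> = (2 * B + 1) / \<delta>\<^sup>2"
  have "2 * B < \<kappa> * \<delta>\<^sup>2" unfolding \<kappa>_def using \<delta> by simp
  then obtain y0 where y0: "\<bar>y0 - xmax\<bar> < \<delta>"
    "\<And>y. u y - \<kappa> * (y - xmax)\<^sup>2 \<le> u y0 - \<kappa> * (y0 - xmax)\<^sup>2"
    using penalized_max_near_center[OF cu B \<delta>(1)] by blast
  define \<phi> where "\<phi> y = \<kappa> * (y - xmax)\<^sup>2" for y
  have d\<phi>: "(\<phi> has_real_derivative 2 * \<kappa> * (y - xmax)) (at y)" for y
    unfolding \<phi>_def by (auto intro!: derivative_eq_intros)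
  have "C1 \<phi>"
    unfolding C1_def DERIV_imp_deriv[OF d\<phi>] using d\<phi> by (auto intro!: continuous_intros)
  moreover have "\<forall>y. dist y y0 < 1 \<longrightarrow> u y - \<phi> y \<le> u y0 - \<phi> y0"
    using y0(2) unfolding \<phi>_def by blast
  ultimately have "(Q + deriv \<phi> y0)\<^sup>2 / 2 + V y0 - c \<le> 0"
    using sub unfolding visc_sub_def by (meson zero_less_one)
  moreover have "0 \<le> (Q + deriv \<phi> y0)\<^sup>2 / 2" by simp
  ultimately show False using V_big[OF y0(1)] by linarith
qed

lemma visc_super_avg_momentum_le:
  assumes sup: "visc_super (\<lambda>x p. (Q + p)\<^sup>2 / 2 + V x - c) u" and pu: "periodic1 u"
    and cM: "Vmax < c"
  shows "avg_momentum c \<le> \<bar>Q\<bar>"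
proof (rule ccontr)
  assume "\<not> ?thesis"
  then have Qs: "\<bar>Q\<bar> < avg_momentum c" by simp
  have Fp: "avg_momentum c > 0" using avg_momentum_pos[OF cM] .
  define \<mu> where "\<mu> = Q / avg_momentum c"
  have "\<bar>\<mu>\<bar> < 1" unfolding \<mu>_def using Qs Fp by (simp add: abs_divide divide_less_eq)
  then have l: "\<mu>\<^sup>2 < 1" by (simp add: abs_square_less_1)
  define g where "g x = \<mu> * momentum c x" for x
  have cg: "continuous_on UNIV g" unfolding g_def by (intro continuous_intros momentum_continuous)
  have pg: "periodic1 g" using momentum_periodic unfolding g_def periodic1_def by simp
  have tg: "tint g = Q"
    unfolding g_def by (subst tint_cmult[OF momentum_continuous])
      (use Fp in \<open>simp add: avg_momentum_def[symmetric] \<mu>_def\<close>)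
  obtain \<phi> where \<phi>: "C1 \<phi>" "periodic1 \<phi>" "\<And>x. deriv \<phi> x = g x - Q"
    using periodic_C1_primitive[OF cg pg] unfolding tg by blast
  show False
  proof (rule visc_super_excludes_strict_subsolution[OF sup pu \<phi>(1,2)])
    fix x
    have "(Q + deriv \<phi> x)\<^sup>2 = \<mu>\<^sup>2 * (2 * (c - V x))"
      using \<phi>(3) momentum_square[of c x] cM by (simp add: g_def power_mult_distrib)
    then have "(Q + deriv \<phi> x)\<^sup>2 / 2 + V x - c = (\<mu>\<^sup>2 - 1) * (c - V x)"
      by (simp add: algebra_simps)
    moreover have "c - V x > 0" using V_le_Vmax[of x] cM by simp
    ultimately show "(Q + deriv \<phi> x)\<^sup>2 / 2 + V x - c < 0" using l by (simp add: mult_neg_pos)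
  qed
qed

lemma visc_sub_abs_le_avg_momentum:
  assumes sub: "visc_sub (\<lambda>x p. (Q + p)\<^sup>2 / 2 + V x - c) u" and pu: "periodic1 u"
  shows "\<bar>Q\<bar> \<le> avg_momentum c"
proof (rule ccontr)
  assume "\<not> ?thesis"
  then have Qs: "avg_momentum c < \<bar>Q\<bar>" by simp
  have cM: "Vmax \<le> c" by (rule visc_sub_level_ge_Vmax[OF sub pu])
  define b where "b = \<bar>Q\<bar> - avg_momentum c"
  have bpos: "b > 0" unfolding b_def using Qs by simp
  define g where "g x = sgn Q * (momentum c x + b)" for x
  have cg: "continuous_on UNIV g" unfolding g_def by (intro continuous_intros momentum_continuous)
  have pg: "periodic1 g" using momentum_periodic unfolding g_def periodic1_def by simp
  have "tint g = sgn Q * (avg_momentum c + b)"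
    unfolding g_def
    by (simp add: tint_cmult tint_add momentum_continuous continuous_on_add avg_momentum_def)
  then have tg: "tint g = Q" unfolding b_def by (simp add: sgn_mult_abs)
  obtain \<phi> where \<phi>: "C1 \<phi>" "periodic1 \<phi>" "\<And>x. deriv \<phi> x = g x - Q"
    using periodic_C1_primitive[OF cg pg] unfolding tg by blast
  have "0 \<le> sqrt (2 * (c - Vmax))" using cM by simp
  then have "0 \<le> avg_momentum c" using avg_momentum_ge[OF cM] by linarith
  then have Q0: "Q \<noteq> 0" using Qs by auto
  show False
  proof (rule visc_sub_excludes_strict_supersolution[OF sub pu \<phi>(1,2)])
    fix x
    have "(Q + deriv \<phi> x)\<^sup>2 = (momentum c x + b)\<^sup>2"
      using \<phi>(3) Q0 by (simp add: g_def power_mult_distrib sgn_if)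
    moreover have "(momentum c x + b)\<^sup>2 > (momentum c x)\<^sup>2"
      using momentum_nonneg[OF cM, of x] bpos
      by (simp add: power2_eq_square add_pos_nonneg mult_strict_mono' algebra_simps)
    ultimately show "(Q + deriv \<phi> x)\<^sup>2 / 2 + V x - c > 0"
      using momentum_square[OF cM, of x] by simp
  qed
qed

lemma classical_periodic_solution:
  assumes cM: "Vmax \<le> c" and Qs: "\<bar>Q\<bar> = avg_momentum c" and Q0: "Q \<noteq> 0"
  shows "\<exists>u. periodic1 u \<and> visc_sol (\<lambda>x p. (Q + p)\<^sup>2 / 2 + V x - c) u"
proof -
  define g where "g x = sgn Q * momentum c x" for x
  have cg: "continuous_on UNIV g" unfolding g_def by (intro continuous_intros momentum_continuous)
  have pg: "periodic1 g" using momentum_periodic unfolding g_def periodic1_def by simp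
  have tg: "tint g = Q" unfolding g_def using Qs
    by (simp add: tint_cmult[OF momentum_continuous] avg_momentum_def[symmetric]) (metis sgn_mult_abs)
  obtain \<phi> where \<phi>: "C1 \<phi>" "periodic1 \<phi>" "\<And>x. deriv \<phi> x = g x - Q"
    using periodic_C1_primitive[OF cg pg] unfolding tg by blast
  have "visc_sol (\<lambda>x p. (Q + p)\<^sup>2 / 2 + V x - c) \<phi>"
  proof (rule visc_sol_classical)
    fix x show "(\<phi> has_real_derivative deriv \<phi> x) (at x)" using \<phi>(1) unfolding C1_def by blast
    have "(Q + deriv \<phi> x)\<^sup>2 = (momentum c x)\<^sup>2" using \<phi>(3) Q0 by (simp add: g_def sgn_if)
    then show "(Q + deriv \<phi> x)\<^sup>2 / 2 + V x - c = 0"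
      using momentum_square[OF cM, of x] by (simp add: field_simps)
  qed
  then show ?thesis using \<phi>(2) by blast
qed

definition action :: "real \<Rightarrow> real" where
  "action y = (LBINT x=ereal xmax..ereal y. momentum Vmax x)"

lemma action_has_derivative: "(action has_real_derivative momentum Vmax y) (at y)"
  unfolding action_def by (rule interval_integral_has_real_derivative[OF momentum_continuous])

lemma action_add_one: "action (y + 1) = action y + Pflat"
  using interval_integral_FTC_UNIV[OF momentum_continuous action_has_derivative, of y "y + 1"]
    periodic1_interval_integral[OF momentum_continuous momentum_periodic, of y]
  unfolding Pflat_def avg_momentum_def by simp

lemma action_mono:
  assumes "z \<le> y"
  shows "action z \<le> action y"
proof (rule DERIV_nonneg_imp_nondecreasing[of z y action])
  fix x show "\<exists>d. (action has_real_derivative d) (at x) \<and> 0 \<le> d"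
    using action_has_derivative momentum_nonneg[of Vmax x] by auto
qed (rule assms)

lemma action_xmax_add_int: "action (xmax + real_of_int k) = real_of_int k * Pflat"
  using add_one_shift_int[of action Pflat xmax k] action_add_one by (simp add: action_def)

lemma action_eq_imp_eq:
  assumes sx: "momentum Vmax x > 0" and eq: "action z = action x"
  shows "z = x"
proof (rule ccontr)
  assume "z \<noteq> x"
  then consider "x < z" | "z < x" by linarith
  then show False
  proof cases
    case 1
    obtain d where d: "d > 0" "\<forall>h>0. h < d \<longrightarrow> action x < action (x + h)"
      using DERIV_pos_inc_right[OF action_has_derivative sx] by blast
    define h where "h = min d (z - x) / 2"
    have h: "h > 0" "h < d" "x + h \<le> z" using d 1 unfolding h_def by (auto simp: min_def field_simps)
    have "action (x + h) \<le> action z" by (rule action_mono) (use h in simp)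
    then show False using d(2) h eq by force
  next
    case 2
    obtain d where d: "d > 0" "\<forall>h>0. h < d \<longrightarrow> action (x - h) < action x"
      using DERIV_pos_inc_left[OF action_has_derivative sx] by blast
    define h where "h = min d (x - z) / 2"
    have h: "h > 0" "h < d" "z \<le> x - h" using d 2 unfolding h_def by (auto simp: min_def field_simps)
    have "action z \<le> action (x - h)" by (rule action_mono) (use h in simp)
    then show False using d(2) h eq by force
  qed
qed

definition kink :: "real \<Rightarrow> real \<Rightarrow> real" where
  "kink Q y = sawtooth Pflat Q (action y) - Q * y"

lemma kink_periodic: "periodic1 (kink Q)"
  unfolding periodic1_def kink_def action_add_one sawtooth_shift[OF Pflat_pos]
  by (simp add: algebra_simps)

lemma kink_continuous: "\<bar>Q\<bar> \<le> Pflat \<Longrightarrow> continuous_on UNIV (kink Q)"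
  unfolding kink_def
  by (intro continuous_intros continuous_on_compose2[OF sawtooth_continuous[OF Pflat_pos]]
      DERIV_continuous_on_UNIV[OF action_has_derivative]) auto

(* Since the sawtooth is 1-Lipschitz, a test function touching kink Q from above has slope
   (shifted by Q) within \<plusminus>momentum. *)
lemma kink_touching_above:
  assumes Q: "\<bar>Q\<bar> \<le> Pflat" and C: "C1 \<phi>" and e: "e > 0"
    and touch: "\<forall>y. dist y x < e \<longrightarrow> kink Q y - \<phi> y \<le> kink Q x - \<phi> x"
  shows "(Q + deriv \<phi> x)\<^sup>2 / 2 + V x - Vmax \<le> 0"
proof -
  let ?U = "\<lambda>y. sawtooth Pflat Q (action y)"
  have lip: "\<bar>?U y - ?U x\<bar> \<le> \<bar>action y - action x\<bar>" for y
    using sawtooth_lipschitz[OF Pflat_pos Q] by blast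
  define \<psi> where "\<psi> y = \<phi> y + Q * y" for y
  have d\<psi>: "(\<psi> has_real_derivative deriv \<phi> x + Q) (at x)"
    unfolding \<psi>_def using C unfolding C1_def by (auto intro!: derivative_eq_intros)
  have key: "?U y - ?U x \<le> \<psi> y - \<psi> x" if "\<bar>y - x\<bar> < e" for y
    using touch[rule_format, of y] that unfolding kink_def \<psi>_def
    by (simp add: dist_real_def algebra_simps)
  have up: "deriv \<phi> x + Q - momentum Vmax x \<le> 0"
  proof (rule DERIV_le_0_of_left_min[OF DERIV_diff[OF d\<psi> action_has_derivative] e])
    fix h assume h: "0 < h" "h < e"
    have "action (x - h) \<le> action x" by (rule action_mono) (use h in simp)
    then show "\<psi> x - action x \<le> \<psi> (x - h) - action (x - h)"
      using key[of "x - h"] lip[of "x - h"] h by (simp add: abs_le_iff abs_if split: if_splits)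
  qed
  have lo: "0 \<le> deriv \<phi> x + Q + momentum Vmax x"
  proof (rule DERIV_ge_0_of_right_min[OF DERIV_add[OF d\<psi> action_has_derivative] e])
    fix h assume h: "0 < h" "h < e"
    have "action x \<le> action (x + h)" by (rule action_mono) (use h in simp)
    then show "\<psi> x + action x \<le> \<psi> (x + h) + action (x + h)"
      using key[of "x + h"] lip[of "x + h"] h by (simp add: abs_le_iff abs_if split: if_splits)
  qed
  have "\<bar>Q + deriv \<phi> x\<bar> \<le> \<bar>momentum Vmax x\<bar>" using up lo momentum_nonneg[of Vmax x] by (simp add: abs_le_iff)
  then have "(Q + deriv \<phi> x)\<^sup>2 \<le> (momentum Vmax x)\<^sup>2" by (simp add: abs_le_square_iff)
  then show ?thesis using momentum_square[of Vmax x] by simp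
qed

(* The kinks of the sawtooth sit at the multiples of Pflat, i.e. at the translates of xmax,
   where V = Vmax and the supersolution inequality is trivial. Elsewhere kink Q lies locally
   below a classical solution with slope \<plusminus>momentum. *)
lemma kink_touching_below:
  assumes Q: "\<bar>Q\<bar> \<le> Pflat" and C: "C1 \<phi>" and e: "e > 0"
    and touch: "\<forall>y. dist y x < e \<longrightarrow> kink Q x - \<phi> x \<le> kink Q y - \<phi> y"
  shows "(Q + deriv \<phi> x)\<^sup>2 / 2 + V x - Vmax \<ge> 0"
proof (cases "V x = Vmax")
  case False
  let ?U = "\<lambda>y. sawtooth Pflat Q (action y)"
  have sx: "momentum Vmax x > 0" unfolding momentum_def using False V_le_Vmax[of x] by simp
  define k where "k = \<lfloor>action x / Pflat\<rfloor>"
  have "real_of_int k * Pflat \<noteq> action x"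
  proof
    assume "real_of_int k * Pflat = action x"
    then have "xmax + real_of_int k = x" using action_xmax_add_int action_eq_imp_eq[OF sx] by metis
    then show False using False periodic1_add_int[OF V_periodic, of xmax k] by (simp add: Vmax_def)
  qed
  then have "real_of_int k * Pflat < action x"
    using floor_divide_lower[OF Pflat_pos, of "action x"] unfolding k_def by (simp add: algebra_simps)
  then obtain \<sigma> d where \<sigma>: "\<bar>\<sigma>\<bar> = 1" "d > 0"
    "\<And>b. \<bar>b - action x\<bar> < d \<Longrightarrow> sawtooth Pflat Q b \<le> ?U x + \<sigma> * (b - action x)"
    using sawtooth_locally_below_slope[OF Pflat_pos] unfolding k_def by (metis mult.commute)
  have "isCont action x" using action_has_derivative by (rule DERIV_isCont)
  then obtain d' where d': "d' > 0" "\<forall>y. dist y x < d' \<longrightarrow> dist (action y) (action x) < d"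
    using \<sigma>(2) unfolding continuous_at_eps_delta by blast
  define g where "g y = \<phi> y + Q * y - \<sigma> * action y" for y
  have dg: "(g has_real_derivative deriv \<phi> x + Q - \<sigma> * momentum Vmax x) (at x)"
    unfolding g_def using C unfolding C1_def
    by (auto intro!: derivative_eq_intros action_has_derivative)
  have loc: "\<forall>y. \<bar>x - y\<bar> < min e d' \<longrightarrow> g y \<le> g x"
  proof (intro allI impI)
    fix y assume y: "\<bar>x - y\<bar> < min e d'"
    have "kink Q x - \<phi> x \<le> kink Q y - \<phi> y"
      using touch y by (simp add: dist_real_def abs_minus_commute)
    moreover have "\<bar>y - x\<bar> < d'" using y by (simp add: abs_minus_commute)
    then have "\<bar>action y - action x\<bar> < d" using d'(2) by (simp add: dist_real_def)
    then have "?U y \<le> ?U x + \<sigma> * (action y - action x)" using \<sigma>(3) by blast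
    ultimately show "g y \<le> g x" unfolding g_def kink_def by (simp add: algebra_simps)
  qed
  have "deriv \<phi> x + Q - \<sigma> * momentum Vmax x = 0"
    by (rule DERIV_local_max[OF dg _ loc]) (use e d' in simp)
  then have "(Q + deriv \<phi> x)\<^sup>2 = (\<sigma> * momentum Vmax x)\<^sup>2" by (simp add: algebra_simps)
  also have "\<dots> = (momentum Vmax x)\<^sup>2" using \<sigma>(1) by (simp add: power_mult_distrib abs_if split: if_splits)
  finally show ?thesis using momentum_square[of Vmax x] by (simp add: field_simps)
qed simp

lemma kink_visc_sol:
  assumes "\<bar>Q\<bar> \<le> Pflat"
  shows "visc_sol (\<lambda>x p. (Q + p)\<^sup>2 / 2 + V x - Vmax) (kink Q)"
  unfolding visc_sol_def visc_sub_def visc_super_def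
  using kink_continuous[OF assms] kink_touching_above[OF assms] kink_touching_below[OF assms]
  by blast

lemma effH_flat:
  assumes Q: "\<bar>Q\<bar> \<le> Pflat"
  shows "effH V Q = Vmax"
  unfolding effH_def
proof (rule the_equality)
  show "\<exists>u. periodic1 u \<and> visc_sol (\<lambda>x p. (Q + p)\<^sup>2 / 2 + V x - Vmax) u"
    using kink_periodic kink_visc_sol[OF Q] by blast
next
  fix c assume "\<exists>u. periodic1 u \<and> visc_sol (\<lambda>x p. (Q + p)\<^sup>2 / 2 + V x - c) u"
  then obtain u where pu: "periodic1 u"
    and sub: "visc_sub (\<lambda>x p. (Q + p)\<^sup>2 / 2 + V x - c) u"
    and sup: "visc_super (\<lambda>x p. (Q + p)\<^sup>2 / 2 + V x - c) u"
    unfolding visc_sol_def by blast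
  show "c = Vmax"
  proof (rule ccontr)
    assume "c \<noteq> Vmax"
    then have "Vmax < c" using visc_sub_level_ge_Vmax[OF sub pu] by simp
    then have "Pflat < avg_momentum c" "avg_momentum c \<le> \<bar>Q\<bar>"
      using visc_super_avg_momentum_le[OF sup pu] avg_momentum_strict_mono[of Vmax c]
      unfolding Pflat_def by auto
    then show False using Q by simp
  qed
qed

lemma effH_above_flat:
  assumes Q: "Pflat < \<bar>Q\<bar>"
  shows "Vmax < effH V Q" "avg_momentum (effH V Q) = \<bar>Q\<bar>"
proof -
  obtain c where c: "Vmax < c" "avg_momentum c = \<bar>Q\<bar>" using avg_momentum_attains[OF Q] by blast
  have "Q \<noteq> 0" using Q Pflat_pos by auto
  have "effH V Q = c"
    unfolding effH_def
  proof (rule the_equality)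
    show "\<exists>u. periodic1 u \<and> visc_sol (\<lambda>x p. (Q + p)\<^sup>2 / 2 + V x - c) u"
      using classical_periodic_solution[of c Q] c \<open>Q \<noteq> 0\<close> by simp
  next
    fix c' assume "\<exists>u. periodic1 u \<and> visc_sol (\<lambda>x p. (Q + p)\<^sup>2 / 2 + V x - c') u"
    then obtain u where pu: "periodic1 u"
      and sub: "visc_sub (\<lambda>x p. (Q + p)\<^sup>2 / 2 + V x - c') u"
      and sup: "visc_super (\<lambda>x p. (Q + p)\<^sup>2 / 2 + V x - c') u"
      unfolding visc_sol_def by blast
    have "Vmax \<le> c'" by (rule visc_sub_level_ge_Vmax[OF sub pu])
    moreover have "c' \<noteq> Vmax"
      using visc_sub_abs_le_avg_momentum[OF sub pu] Q unfolding Pflat_def by auto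
    ultimately have c'M: "Vmax < c'" by simp
    have c': "avg_momentum c' = \<bar>Q\<bar>"
      using visc_sub_abs_le_avg_momentum[OF sub pu] visc_super_avg_momentum_le[OF sup pu c'M] by simp
    then show "c' = c"
    proof (cases c' c rule: linorder_cases)
      case less then show ?thesis using avg_momentum_strict_mono[of c' c] c'M c c' by simp
    next
      case greater then show ?thesis using avg_momentum_strict_mono[of c c'] c'M c c' by simp
    qed
  qed
  then show "Vmax < effH V Q" "avg_momentum (effH V Q) = \<bar>Q\<bar>" using c by simp_all
qed

lemma Vmax_le_effH: "Vmax \<le> effH V Q"
  using effH_flat[of Q] effH_above_flat(1)[of Q] by (cases "\<bar>Q\<bar> \<le> Pflat") auto

lemma Pcrit_eq_Pflat: "Pcrit V = Pflat"
proof -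
  have inf: "Inf (range (effH V)) = Vmax"
  proof (rule cInf_eq_minimum)
    have "effH V 0 = Vmax" using effH_flat[of 0] Pflat_pos by simp
    then show "Vmax \<in> range (effH V)" by (metis rangeI)
  qed (use Vmax_le_effH in auto)
  have "{P. 0 \<le> P \<and> effH V P > Inf (range (effH V))} = {Pflat<..}"
  proof (intro set_eqI iffI)
    fix P assume "P \<in> {P. 0 \<le> P \<and> effH V P > Inf (range (effH V))}"
    then have "0 \<le> P" "effH V P \<noteq> Vmax" using inf by auto
    then show "P \<in> {Pflat<..}" using effH_flat[of P] by force
  next
    fix P assume "P \<in> {Pflat<..}"
    then have "Pflat < \<bar>P\<bar>" "0 \<le> P" using Pflat_pos by auto
    then show "P \<in> {P. 0 \<le> P \<and> effH V P > Inf (range (effH V))}"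
      using effH_above_flat(1) inf by simp
  qed
  then show ?thesis unfolding Pcrit_def by simp
qed

end

section \<open>A maximum principle for the viscous Riccati equation\<close>

lemma nonpos_persists:
  fixes q q' :: "real \<Rightarrow> real"
  assumes dq: "\<And>x. (q has_real_derivative q' x) (at x)"
    and down: "\<And>t. q t = 0 \<Longrightarrow> q' t < 0"
    and x1: "q x1 \<le> 0" and y: "x1 \<le> y"
  shows "q y \<le> 0"
proof (rule ccontr)
  assume "\<not> q y \<le> 0"
  then have qy: "q y > 0" by simp
  have cq: "continuous_on UNIV q" by (rule DERIV_continuous_on_UNIV[OF dq])
  define S where "S = {x1..y} \<inter> {t. q t \<le> 0}"
  have "closed {t. q t \<le> (\<lambda>_. 0) t}" by (rule closed_Collect_le[OF cq continuous_on_const])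
  then have "compact S" unfolding S_def by (intro compact_Int_closed compact_Icc) simp
  moreover have "x1 \<in> S" unfolding S_def using x1 y by simp
  ultimately obtain t0 where t0: "t0 \<in> S" "\<forall>t\<in>S. t \<le> t0" using compact_attains_sup by blast
  have t0b: "x1 \<le> t0" "t0 \<le> y" "q t0 \<le> 0" using t0(1) unfolding S_def by auto
  have "continuous_on {t0..y} q" using cq continuous_on_subset by blast
  then obtain t where t: "t0 \<le> t" "t \<le> y" "q t = 0"
    using IVT'[of q t0 0 y] t0b(2,3) qy by auto
  then have "t \<in> S" unfolding S_def using t0b by simp
  then have qt0: "q t0 = 0" using t0(2) t by force
  then have "t0 < y" using qy t0b(2) by (cases "t0 = y") auto
  obtain d where d: "d > 0" "\<forall>h>0. h < d \<longrightarrow> q (t0 + h) < q t0"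
    using DERIV_neg_dec_right[OF dq down[OF qt0]] by blast
  define e where "e = min d (y - t0) / 2"
  have e: "e > 0" "e < d" "t0 + e \<le> y" using d \<open>t0 < y\<close> unfolding e_def by (auto simp: min_def field_simps)
  have "t0 + e \<in> S" unfolding S_def using e d(2) qt0 t0b by (auto simp: less_imp_le)
  then show False using t0(2) e by force
qed

(* At the extrema of q - Q the viscous terms cancel, which turns the two Riccati equations
   into a maximum principle for q - Q. *)
locale riccati_pair =
  fixes V q q' Q Q' E :: "real \<Rightarrow> real" and h ch :: real
  assumes q_deriv: "\<And>x. (q has_real_derivative q' x) (at x)"
    and Q_deriv: "\<And>x. (Q has_real_derivative Q' x) (at x)"
    and q_periodic: "periodic1 q"
    and Q_periodic: "periodic1 Q"
    and q_eq: "\<And>x. - (h / 2) * q' x + (q x)\<^sup>2 / 2 + V x = ch"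
    and Q_eq: "\<And>x. - (h / 2) * Q' x + (Q x)\<^sup>2 / 2 + V x = E x"
    and same_mean: "tint q = tint Q"
begin

lemma difference_continuous: "continuous_on UNIV (\<lambda>x. q x - Q x)"
  using DERIV_continuous_on_UNIV[OF q_deriv] DERIV_continuous_on_UNIV[OF Q_deriv]
  by (rule continuous_on_diff)

lemma difference_periodic: "periodic1 (\<lambda>x. q x - Q x)"
  using q_periodic Q_periodic by (simp add: periodic1_def)

lemma difference_at_critical_point:
  assumes "q' x = Q' x"
  shows "(q x - Q x) * (Q x + (q x - Q x) / 2) = ch - E x"
  using q_eq[of x] Q_eq[of x] assms by (simp add: power2_eq_square field_simps)

lemma difference_max:
  obtains x where "\<And>y. q y - Q y \<le> q x - Q x" "0 \<le> q x - Q x"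
    "(q x - Q x) * (Q x + (q x - Q x) / 2) = ch - E x"
proof -
  obtain x where x: "\<And>y. q y - Q y \<le> q x - Q x"
    using periodic1_attains_max[OF difference_continuous difference_periodic] by blast
  have "tint (\<lambda>y. q y - Q y) \<le> q x - Q x"
    by (rule tint_le_const[OF difference_continuous]) (use x in blast)
  then have "0 \<le> q x - Q x"
    using same_mean tint_diff[OF DERIV_continuous_on_UNIV[OF q_deriv] DERIV_continuous_on_UNIV[OF Q_deriv]]
    by simp
  moreover have "q' x - Q' x = 0"
    by (rule DERIV_local_max[OF DERIV_diff[OF q_deriv Q_deriv] zero_less_one]) (use x in blast)
  then have "(q x - Q x) * (Q x + (q x - Q x) / 2) = ch - E x"
    by (intro difference_at_critical_point) simp
  ultimately show thesis using that x by blast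
qed

lemma difference_min:
  obtains x where "\<And>y. q x - Q x \<le> q y - Q y" "q x - Q x \<le> 0"
    "(q x - Q x) * (Q x + (q x - Q x) / 2) = ch - E x"
proof -
  obtain x where x: "\<And>y. q x - Q x \<le> q y - Q y"
    using periodic1_attains_min[OF difference_continuous difference_periodic] by blast
  have "q x - Q x \<le> tint (\<lambda>y. q y - Q y)"
    by (rule tint_ge_const[OF difference_continuous]) (use x in blast)
  then have "q x - Q x \<le> 0"
    using same_mean tint_diff[OF DERIV_continuous_on_UNIV[OF q_deriv] DERIV_continuous_on_UNIV[OF Q_deriv]]
    by simp
  moreover have "q' x - Q' x = 0"
    by (rule DERIV_local_min[OF DERIV_diff[OF q_deriv Q_deriv] zero_less_one]) (use x in blast)
  then have "(q x - Q x) * (Q x + (q x - Q x) / 2) = ch - E x"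
    by (intro difference_at_critical_point) simp
  ultimately show thesis using that x by blast
qed

lemma level_lower_bound:
  assumes "\<And>x. 0 \<le> Q x" and "\<And>x. \<bar>E x - C\<bar> \<le> \<delta>"
  shows "C - \<delta> \<le> ch"
proof -
  obtain x where "0 \<le> q x - Q x" "(q x - Q x) * (Q x + (q x - Q x) / 2) = ch - E x"
    using difference_max by blast
  moreover have "0 \<le> Q x + (q x - Q x) / 2" using assms(1)[of x] calculation(1) by simp
  ultimately have "E x \<le> ch" by (metis diff_ge_0_iff_ge mult_nonneg_nonneg)
  then show ?thesis using assms(2)[of x] by (simp add: abs_le_iff)
qed

lemma positive:
  assumes h: "h > 0" and V_below: "\<And>x. V x < ch" and mean: "0 < tint q"
  shows "0 < q x"
proof (rule ccontr)
  assume "\<not> 0 < q x"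
  then have qx: "q x \<le> 0" by simp
  have down: "q' t < 0" if "q t = 0" for t
  proof -
    have "(h / 2) * q' t = V t - ch" using q_eq[of t] that by simp
    then have "(h / 2) * q' t < 0" using V_below[of t] by linarith
    then show ?thesis using h by (simp add: mult_less_0_iff)
  qed
  have "q z \<le> 0" for z
  proof -
    have "x \<le> z + real_of_int \<lceil>x - z\<rceil>" by linarith
    then have "q (z + real_of_int \<lceil>x - z\<rceil>) \<le> 0" using nonpos_persists[OF q_deriv down qx] by blast
    then show ?thesis using periodic1_add_int[OF q_periodic] by simp
  qed
  then have "tint q \<le> 0" by (intro tint_le_const DERIV_continuous_on_UNIV[OF q_deriv])
  then show False using mean by simp
qed

lemma level_upper_bound:
  assumes "\<And>x. 0 \<le> Q x" and "\<And>x. 0 < q x" and "\<And>x. \<bar>E x - C\<bar> \<le> \<delta>"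
  shows "ch \<le> C + \<delta>"
proof -
  obtain x where "q x - Q x \<le> 0" "(q x - Q x) * (Q x + (q x - Q x) / 2) = ch - E x"
    using difference_min by blast
  moreover have "0 \<le> (Q x + q x) / 2" using assms(1,2)[of x] by simp
  then have "0 \<le> Q x + (q x - Q x) / 2" by (simp add: field_simps)
  ultimately have "ch \<le> E x" by (metis diff_le_0_iff_le mult_nonpos_nonneg)
  then show ?thesis using assms(3)[of x] by (simp add: abs_le_iff)
qed

lemma difference_upper_bound:
  assumes a: "a > 0" "\<And>x. a \<le> Q x" and E: "\<And>x. ch - E x \<le> \<eta>"
  shows "q x - Q x \<le> \<eta> / a"
proof -
  obtain xa where xa: "\<And>y. q y - Q y \<le> q xa - Q xa" "0 \<le> q xa - Q xa"
    "(q xa - Q xa) * (Q xa + (q xa - Q xa) / 2) = ch - E xa"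
    using difference_max by blast
  have "0 \<le> (q xa - Q xa) / 2" using xa(2) by simp
  then have "a \<le> Q xa + (q xa - Q xa) / 2" using a(2)[of xa] by linarith
  then have "(q xa - Q xa) * a \<le> (q xa - Q xa) * (Q xa + (q xa - Q xa) / 2)"
    using xa(2) by (rule mult_left_mono)
  then have "(q xa - Q xa) * a \<le> \<eta>" using xa(3) E[of xa] by simp
  then have "q xa - Q xa \<le> \<eta> / a" using a(1) by (simp add: pos_le_divide_eq)
  then show ?thesis using xa(1)[of x] by linarith
qed

lemma difference_lower_bound:
  assumes a: "a > 0" "\<And>x. a \<le> Q x" and q_pos: "\<And>x. 0 < q x" and E: "\<And>x. E x - ch \<le> \<eta>"
  shows "- (2 * \<eta> / a) \<le> q x - Q x"
proof -
  obtain xb where xb: "\<And>y. q xb - Q xb \<le> q y - Q y" "q xb - Q xb \<le> 0"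
    "(q xb - Q xb) * (Q xb + (q xb - Q xb) / 2) = ch - E xb"
    using difference_min by blast
  have "a \<le> Q xb + q xb" using a(2)[of xb] q_pos[of xb] by linarith
  then have "a / 2 \<le> (Q xb + q xb) / 2" by (rule divide_right_mono) simp
  also have "(Q xb + q xb) / 2 = Q xb + (q xb - Q xb) / 2" by (simp add: field_simps)
  finally have "(q xb - Q xb) * (Q xb + (q xb - Q xb) / 2) \<le> (q xb - Q xb) * (a / 2)"
    using xb(2) by (rule mult_left_mono_neg)
  then have "- \<eta> \<le> (q xb - Q xb) * (a / 2)" using xb(3) E[of xb] by simp
  then have "- (2 * \<eta> / a) \<le> q xb - Q xb" using a(1) by (simp add: field_simps)
  then show ?thesis using xb(1)[of x] by linarith
qed

lemma difference_bound:
  assumes a: "a > 0" "\<And>x. a \<le> Q x" and q_pos: "\<And>x. 0 < q x"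
    and E: "\<And>x. \<bar>E x - C\<bar> \<le> \<delta>"
  shows "\<bar>q x - Q x\<bar> \<le> 4 * \<delta> / a"
proof -
  have \<delta>: "0 \<le> \<delta>" using E[of 0] by linarith
  have Q_nonneg: "0 \<le> Q y" for y using a(1) a(2)[of y] by linarith
  have "C - \<delta> \<le> ch" "ch \<le> C + \<delta>"
    using level_lower_bound[OF Q_nonneg E] level_upper_bound[OF Q_nonneg q_pos E] by blast+
  then have "ch - E y \<le> 2 * \<delta>" "E y - ch \<le> 2 * \<delta>" for y using E[of y] by (simp_all add: abs_le_iff)
  then have "q x - Q x \<le> 2 * \<delta> / a" "- (2 * (2 * \<delta>) / a) \<le> q x - Q x"
    using difference_upper_bound[OF a] difference_lower_bound[OF a q_pos] by blast+
  moreover have "2 * \<delta> / a \<le> 4 * \<delta> / a" using \<delta> a(1) by (simp add: divide_right_mono)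
  ultimately show ?thesis by (simp add: abs_le_iff)
qed

end

section \<open>The corrector expansion\<close>

lemma square_sum_powers_split:
  fixes c :: "nat \<Rightarrow> 'a :: comm_semiring_1"
  shows "(\<Sum>j\<le>N. h ^ j * c j)\<^sup>2 = (\<Sum>k\<le>N. h ^ k * (\<Sum>i\<le>k. c i * c (k - i)))
    + (\<Sum>(i, j)\<in>{(i, j). i \<le> N \<and> j \<le> N \<and> N < i + j}. h ^ (i + j) * (c i * c j))"
proof -
  define f where "f i j = h ^ (i + j) * (c i * c j)" for i j
  define Hi where "Hi = {(i, j). i \<le> N \<and> j \<le> N \<and> N < i + j}"
  have fin: "finite {(i, j). i + j \<le> N}" "finite Hi"
    unfolding Hi_def by (rule finite_subset[of _ "{..N} \<times> {..N}"], auto)+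
  have "(\<Sum>j\<le>N. h ^ j * c j)\<^sup>2 = (\<Sum>i\<le>N. \<Sum>j\<le>N. f i j)"
    unfolding f_def power2_eq_square sum_product by (simp add: power_add algebra_simps)
  also have "\<dots> = (\<Sum>(i, j)\<in>{..N} \<times> {..N}. f i j)" by (rule sum.cartesian_product)
  also have "{..N} \<times> {..N} = {(i, j). i + j \<le> N} \<union> Hi" unfolding Hi_def by auto
  also have "(\<Sum>(i, j)\<in>{(i, j). i + j \<le> N} \<union> Hi. f i j)
      = (\<Sum>(i, j)\<in>{(i, j). i + j \<le> N}. f i j) + (\<Sum>(i, j)\<in>Hi. f i j)"
    by (rule sum.union_disjoint[OF fin]) (auto simp: Hi_def)
  also have "(\<Sum>(i, j)\<in>{(i, j). i + j \<le> N}. f i j) = (\<Sum>k\<le>N. \<Sum>i\<le>k. f i (k - i))"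
    by (rule sum.triangle_reindex_eq)
  also have "\<dots> = (\<Sum>k\<le>N. h ^ k * (\<Sum>i\<le>k. c i * c (k - i)))"
    unfolding f_def by (intro sum.cong refl) (simp add: sum_distrib_left)
  finally show ?thesis unfolding f_def Hi_def .
qed

lemma sum_powers_mult_shift:
  fixes c :: "nat \<Rightarrow> 'a :: comm_semiring_1"
  shows "(\<Sum>j\<le>N. h ^ j * c j) * h = (\<Sum>k=1..N. h ^ k * c (k - 1)) + h ^ (N + 1) * c N"
proof -
  have "(\<Sum>j\<le>N. h ^ j * c j) * h = (\<Sum>j=0..N. h ^ Suc j * c (Suc j - 1))"
    unfolding sum_distrib_right atLeast0AtMost by (intro sum.cong) (auto simp: algebra_simps)
  also have "\<dots> = (\<Sum>k=Suc 0..Suc N. h ^ k * c (k - 1))" by (rule sum.shift_bounds_cl_Suc_ivl[symmetric])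
  also have "\<dots> = (\<Sum>k=1..N. h ^ k * c (k - 1)) + h ^ (N + 1) * c N" by simp
  finally show ?thesis .
qed

locale corrector_hierarchy = periodic_potential +
  fixes P :: real and v :: "nat \<Rightarrow> real \<Rightarrow> real" and N :: nat
  assumes V_C1: "C1 V"
    and P_gt: "Pcrit V < P"
    and v_0: "v 0 = v0 V P"
    and v_regular: "\<forall>j\<ge>1. smooth (v j) \<and> periodic1 (v j)"
    and v_eq: "\<forall>j\<ge>1. \<forall>x. - (1/2) * deriv (deriv (v (j - 1))) x + pplus V P x * deriv (v j) x
                   + (1/2) * (\<Sum>i=1..j-1. deriv (v i) x * deriv (v (j - i)) x) = Hbar_j V P v j"
begin

definition level :: real where
  "level = effH V P"

lemma P_pos: "0 < P"
  using P_gt Pflat_pos unfolding Pcrit_eq_Pflat by simp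

lemma level_gt_Vmax: "Vmax < level"
  and avg_momentum_level: "avg_momentum level = P"
  using effH_above_flat[of P] P_gt P_pos unfolding level_def Pcrit_eq_Pflat by auto

lemma pplus_eq_momentum: "pplus V P = momentum level"
  by (rule ext) (simp add: pplus_def momentum_def level_def)

lemma momentum_level_pos: "0 < momentum level x"
  using level_gt_Vmax V_le_Vmax[of x] unfolding momentum_def by simp

lemma momentum_level_has_derivative:
  "(momentum level has_real_derivative - deriv V x / momentum level x) (at x)"
proof -
  have pos: "0 < 2 * (level - V x)" using level_gt_Vmax V_le_Vmax[of x] by simp
  have "((\<lambda>x. 2 * (level - V x)) has_real_derivative 2 * (0 - deriv V x)) (at x)"
    using V_C1 unfolding C1_def by (intro DERIV_cmult DERIV_diff DERIV_const) blast
  from DERIV_chain2[OF DERIV_real_sqrt[OF pos] this]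
  show ?thesis unfolding momentum_def by (simp add: field_simps)
qed

(* coef j is the coefficient of h^j in P + (vhat v N h)': the term P + v0' = p\<^sup>+ for j = 0
   and vj' otherwise. *)
definition coef :: "nat \<Rightarrow> real \<Rightarrow> real" where
  "coef j x = (if j = 0 then momentum level x else deriv (v j) x)"

definition coef' :: "nat \<Rightarrow> real \<Rightarrow> real" where
  "coef' j x = (if j = 0 then - deriv V x / momentum level x else deriv (deriv (v j)) x)"

lemma coef_has_derivative: "(coef j has_real_derivative coef' j x) (at x)"
proof (cases "j = 0")
  case False
  then have "smooth (v j)" using v_regular by simp
  then show ?thesis
    using False smooth_has_real_derivative[OF smooth_deriv] unfolding coef_def[abs_def] coef'_def by simp
qed (use momentum_level_has_derivative in \<open>simp add: coef_def[abs_def] coef'_def\<close>)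

lemma coef'_continuous: "continuous_on UNIV (coef' j)"
proof (cases "j = 0")
  case True
  have "continuous_on UNIV (deriv V)" using V_C1 unfolding C1_def by blast
  then show ?thesis unfolding coef'_def[abs_def] using True momentum_level_pos
    by (auto intro!: continuous_intros momentum_continuous simp: less_imp_neq[symmetric])
next
  case False
  then have "smooth (v j)" using v_regular by simp
  then have "continuous_on UNIV (deriv (deriv (v j)))"
    by (rule DERIV_continuous_on_UNIV[OF smooth_has_real_derivative[OF smooth_deriv[OF smooth_deriv]]])
  then show ?thesis unfolding coef'_def[abs_def] using False by simp
qed

lemma coef_periodic: "periodic1 (coef j)"
  using momentum_periodic periodic1_deriv v_regular unfolding coef_def[abs_def]
  by (cases "j = 0") auto

lemma coef'_periodic: "periodic1 (coef' j)"
proof (cases "j = 0")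
  case True
  then show ?thesis using periodic1_deriv[OF V_periodic] momentum_periodic
    unfolding coef'_def[abs_def] periodic1_def by simp
qed (use periodic1_deriv v_regular in \<open>simp add: coef'_def[abs_def]\<close>)

lemma coef_bounded:
  obtains B where "\<And>j x. j \<le> N \<Longrightarrow> \<bar>coef j x\<bar> \<le> B \<and> \<bar>coef' j x\<bar> \<le> B"
proof -
  have "\<exists>B. \<forall>x. \<bar>coef j x\<bar> \<le> B \<and> \<bar>coef' j x\<bar> \<le> B" for j
  proof -
    obtain B1 where "\<And>x. \<bar>coef j x\<bar> \<le> B1"
      using periodic1_bounded[OF DERIV_continuous_on_UNIV[OF coef_has_derivative] coef_periodic] by blast
    moreover obtain B2 where "\<And>x. \<bar>coef' j x\<bar> \<le> B2"
      using periodic1_bounded[OF coef'_continuous coef'_periodic] by blast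
    ultimately show ?thesis by (metis max.cobounded1 max.cobounded2 order_trans)
  qed
  then obtain Bj where Bj: "\<And>j x. \<bar>coef j x\<bar> \<le> Bj j \<and> \<bar>coef' j x\<bar> \<le> Bj j" by metis
  have "\<bar>Bj j\<bar> \<le> (\<Sum>i\<le>N. \<bar>Bj i\<bar>)" if "j \<le> N" for j
    using that by (intro member_le_sum) auto
  then show thesis using that Bj by (meson abs_ge_self order_trans)
qed

lemma v_has_derivative: "(v j has_real_derivative coef j x - (if j = 0 then P else 0)) (at x)"
proof (cases "j = 0")
  case True
  have "((\<lambda>x. (LBINT y=ereal (-1/2)..ereal x. momentum level y) - P * (x + 1/2))
      has_real_derivative momentum level x - P * (1 + 0)) (at x)"
    by (intro DERIV_diff interval_integral_has_real_derivative[OF momentum_continuous]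
        DERIV_cmult DERIV_add DERIV_ident DERIV_const)
  then show ?thesis using True by (simp add: v_0 v0_def[abs_def] pplus_eq_momentum coef_def)
next
  case False
  then show ?thesis using smooth_has_real_derivative v_regular unfolding coef_def by simp
qed

lemma deriv_v: "deriv (v j) x = coef j x - (if j = 0 then P else 0)"
  by (rule DERIV_imp_deriv[OF v_has_derivative])

lemma deriv2_v: "deriv (deriv (v j)) x = coef' j x"
proof (cases "j = 0")
  case True
  have "deriv (v 0) = (\<lambda>x. coef 0 x - P)" using deriv_v[of 0] by auto
  moreover have "((\<lambda>x. coef 0 x - P) has_real_derivative coef' 0 x) (at x)"
    using DERIV_diff[OF coef_has_derivative DERIV_const] by simp
  ultimately show ?thesis using True by (simp add: DERIV_imp_deriv)
qed (simp add: coef'_def)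

lemma corrector_eq_coef:
  assumes k: "1 \<le> k"
  shows "- (1/2) * coef' (k - 1) x + (1/2) * (\<Sum>i\<le>k. coef i x * coef (k - i) x) = Hbar_j V P v k"
proof -
  have e: "- (1/2) * deriv (deriv (v (k - 1))) x + pplus V P x * deriv (v k) x
       + (1/2) * (\<Sum>i=1..k-1. deriv (v i) x * deriv (v (k - i)) x) = Hbar_j V P v k"
    using v_eq k by blast
  have s1: "(\<Sum>i=1..k-1. deriv (v i) x * deriv (v (k - i)) x) = (\<Sum>i=1..k-1. coef i x * coef (k - i) x)"
    by (rule sum.cong) (auto simp: deriv_v)
  define g where "g i = coef i x * coef (k - i) x" for i
  have "{..k} = insert 0 (insert k {1..k-1})" using k by auto
  moreover have "sum g (insert 0 (insert k {1..k-1})) = g 0 + (g k + sum g {1..k-1})"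
    using k by (simp add: sum.insert)
  ultimately have "(\<Sum>i\<le>k. coef i x * coef (k - i) x)
      = coef 0 x * coef k x + (coef k x * coef 0 x + (\<Sum>i=1..k-1. coef i x * coef (k - i) x))"
    unfolding g_def by simp
  moreover have "coef 0 x = momentum level x" by (simp add: coef_def)
  then have "pplus V P x * deriv (v k) x = coef 0 x * coef k x"
    using k by (simp add: pplus_eq_momentum deriv_v)
  ultimately show ?thesis using e s1 by (simp add: deriv2_v algebra_simps)
qed

definition approx :: "real \<Rightarrow> real \<Rightarrow> real" where
  "approx h x = (\<Sum>j\<le>N. h ^ j * coef j x)"

definition approx' :: "real \<Rightarrow> real \<Rightarrow> real" where
  "approx' h x = (\<Sum>j\<le>N. h ^ j * coef' j x)"

definition residual :: "real \<Rightarrow> real \<Rightarrow> real" where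
  "residual h x = - (1/2) * h ^ (N + 1) * coef' N x
     + (1/2) * (\<Sum>(i, j)\<in>{(i, j). i \<le> N \<and> j \<le> N \<and> N < i + j}. h ^ (i + j) * (coef i x * coef j x))"

lemma approx_has_derivative: "(approx h has_real_derivative approx' h x) (at x)"
  unfolding approx_def[abs_def] approx'_def by (intro DERIV_sum DERIV_cmult coef_has_derivative)

lemma approx_periodic: "periodic1 (approx h)"
  using coef_periodic unfolding approx_def[abs_def] periodic1_def by simp

lemma vhat_has_derivative: "(vhat v N h has_real_derivative approx h x - P) (at x)"
proof -
  have "(\<Sum>j\<le>N. h ^ j * (if j = 0 then P else 0)) = (\<Sum>j\<le>N. if j = 0 then P else 0)"
    by (rule sum.cong) auto
  then have "(\<Sum>j\<le>N. h ^ j * (coef j x - (if j = 0 then P else 0))) = approx h x - P"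
    by (simp add: approx_def right_diff_distrib sum_subtractf)
  moreover have "((\<lambda>x. \<Sum>j\<le>N. h ^ j * v j x) has_real_derivative
      (\<Sum>j\<le>N. h ^ j * (coef j x - (if j = 0 then P else 0)))) (at x)"
    by (intro DERIV_sum DERIV_cmult v_has_derivative)
  ultimately show ?thesis unfolding vhat_def[abs_def] atLeast0AtMost by simp
qed

lemma tint_approx: "tint (approx h) = P"
proof -
  have ends: "v j (1/2) = v j (-1/2)" for j
  proof (cases "j = 0")
    case True
    then show ?thesis using avg_momentum_level
      by (simp add: v_0 v0_def pplus_eq_momentum avg_momentum_def tint_def)
  next
    case False
    then have "periodic1 (v j)" using v_regular by simp
    then have "v j (-1/2 + 1) = v j (-1/2)" unfolding periodic1_def by blast
    then show ?thesis by simp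
  qed
  have c: "continuous_on UNIV (\<lambda>x. approx h x - P)"
    by (intro continuous_intros DERIV_continuous_on_UNIV[OF approx_has_derivative])
  have "tint (\<lambda>x. approx h x - P) = vhat v N h (1/2) - vhat v N h (-1/2)"
    by (rule tint_FTC[OF c vhat_has_derivative])
  also have "\<dots> = 0" unfolding vhat_def using ends by simp
  finally show ?thesis
    using tint_diff[OF DERIV_continuous_on_UNIV[OF approx_has_derivative] continuous_on_const, of h P]
    by simp
qed

lemma approx_eq:
  "- (h / 2) * approx' h x + (approx h x)\<^sup>2 / 2 + V x
     = level + (\<Sum>k=1..N. h ^ k * Hbar_j V P v k) + residual h x"
proof -
  define L where "L k = (\<Sum>i\<le>k. coef i x * coef (k - i) x)" for k
  define Ls where "Ls = (\<Sum>k=1..N. h ^ k * L k)"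
  define Hs where "Hs = (\<Sum>(i, j)\<in>{(i, j). i \<le> N \<and> j \<le> N \<and> N < i + j}. h ^ (i + j) * (coef i x * coef j x))"
  define D where "D = (\<Sum>k=1..N. h ^ k * coef' (k - 1) x)"
  have "coef 0 x = momentum level x" by (simp add: coef_def)
  then have L0: "L 0 = 2 * (level - V x)"
    unfolding L_def using momentum_square[of level x] level_gt_Vmax by (simp add: power2_eq_square)
  have "{..N} = insert 0 {1..N}" by auto
  then have "(\<Sum>k\<le>N. h ^ k * L k) = h ^ 0 * L 0 + Ls"
    unfolding Ls_def by (simp add: sum.insert)
  then have sq: "(approx h x)\<^sup>2 = L 0 + Ls + Hs"
    using square_sum_powers_split[of h "\<lambda>j. coef j x" N] unfolding approx_def L_def Hs_def by simp
  have "(\<Sum>k=1..N. h ^ k * Hbar_j V P v k) = (\<Sum>k=1..N. (1/2) * (h ^ k * L k) - (1/2) * (h ^ k * coef' (k - 1) x))"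
    by (rule sum.cong) (use corrector_eq_coef in \<open>auto simp: L_def algebra_simps\<close>)
  also have "\<dots> = (1/2) * Ls - (1/2) * D"
    unfolding Ls_def D_def sum_subtractf sum_distrib_left ..
  finally have hbar: "(\<Sum>k=1..N. h ^ k * Hbar_j V P v k) = (1/2) * Ls - (1/2) * D" .
  have "approx' h x * h = D + h ^ (N + 1) * coef' N x"
    using sum_powers_mult_shift[of h "\<lambda>j. coef' j x" N] unfolding approx'_def D_def by simp
  then have d: "- (h / 2) * approx' h x = - (1/2) * (D + h ^ (N + 1) * coef' N x)"
    by (simp add: algebra_simps)
  show ?thesis unfolding hbar sq L0 d residual_def Hs_def[symmetric] by (simp add: field_simps)
qed

end

lemma tint_deriv_periodic:
  assumes "periodic1 f" "\<And>x. (f has_real_derivative f' x) (at x)" "continuous_on UNIV f'"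
  shows "tint f' = 0"
proof -
  have "f (-1/2 + 1) = f (-1/2)" using assms(1) unfolding periodic1_def by blast
  then show ?thesis using tint_FTC[OF assms(3,2)] by simp
qed

lemma L2T_bigo_powr:
  fixes g :: "real \<Rightarrow> real \<Rightarrow> real"
  assumes bound: "\<forall>\<^sub>F h in at_right 0. continuous_on UNIV (g h) \<and> (\<forall>x. \<bar>g h x\<bar> \<le> C * h ^ n)"
    and s: "s \<le> real n"
  shows "(\<lambda>h. L2T (g h)) \<in> O[at_right 0](\<lambda>h. h powr s)"
proof (rule bigoI)
  show "\<forall>\<^sub>F h in at_right 0. norm (L2T (g h)) \<le> \<bar>C\<bar> * norm (h powr s)"
    using bound eventually_at_right_real[OF zero_less_one]
  proof eventually_elim
    case (elim h)
    then have h: "0 < h" "h \<le> 1" and cg: "continuous_on UNIV (g h)" by auto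
    have "0 \<le> tint (\<lambda>x. (g h x)\<^sup>2)" by (rule tint_ge_const) (auto intro!: continuous_intros cg)
    then have "0 \<le> L2T (g h)" unfolding L2T_def by simp
    moreover have "L2T (g h) \<le> C * h ^ n" using L2T_le[OF cg] elim by blast
    moreover have "h ^ n \<le> h powr s"
      using powr_mono'[OF s, of h] h powr_realpow[OF h(1), of n] by simp
    then have "C * h ^ n \<le> \<bar>C\<bar> * h powr s"
      by (metis abs_ge_self abs_ge_zero mult_mono order_trans zero_le_power h(1) less_imp_le)
    ultimately show ?case using h by simp
  qed
qed

context corrector_hierarchy
begin

lemma deriv_vhat: "deriv (vhat v N h) = (\<lambda>x. approx h x - P)"
  using vhat_has_derivative by (intro ext DERIV_imp_deriv)

lemma residual_bound:
  obtains K where "\<And>h x. 0 < h \<Longrightarrow> h \<le> 1 \<Longrightarrow> \<bar>residual h x\<bar> \<le> K * h ^ (N + 1)"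
proof -
  obtain B where B: "\<And>j x. j \<le> N \<Longrightarrow> \<bar>coef j x\<bar> \<le> B \<and> \<bar>coef' j x\<bar> \<le> B"
    using coef_bounded by blast
  have "\<bar>coef 0 0\<bar> \<le> B" using B by blast
  then have B0: "0 \<le> B" by (meson abs_ge_zero order_trans)
  define Hi where "Hi = {(i, j). i \<le> N \<and> j \<le> N \<and> N < i + j}"
  have "\<bar>residual h x\<bar> \<le> (B / 2 + real (card Hi) * B\<^sup>2 / 2) * h ^ (N + 1)"
    if h: "0 < h" "h \<le> 1" for h x
  proof -
    have "\<bar>h ^ (i + j) * (coef i x * coef j x)\<bar> \<le> h ^ (N + 1) * B\<^sup>2" if "(i, j) \<in> Hi" for i j
    proof -
      have ij: "i \<le> N" "j \<le> N" "N + 1 \<le> i + j" using that unfolding Hi_def by auto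
      have "h ^ (i + j) \<le> h ^ (N + 1)" by (rule power_decreasing) (use ij h in auto)
      moreover have "\<bar>coef i x * coef j x\<bar> \<le> B * B"
        unfolding abs_mult by (rule mult_mono) (use B B0 ij in auto)
      ultimately have "h ^ (i + j) * \<bar>coef i x * coef j x\<bar> \<le> h ^ (N + 1) * (B * B)"
        using h by (intro mult_mono) auto
      then show ?thesis using h by (simp add: abs_mult power2_eq_square)
    qed
    then have "\<bar>\<Sum>(i, j)\<in>Hi. h ^ (i + j) * (coef i x * coef j x)\<bar> \<le> (\<Sum>p\<in>Hi. h ^ (N + 1) * B\<^sup>2)"
      by (intro order_trans[OF sum_abs sum_mono]) auto
    also have "\<dots> = real (card Hi) * (h ^ (N + 1) * B\<^sup>2)" by simp
    finally have pairs: "\<bar>\<Sum>(i, j)\<in>Hi. h ^ (i + j) * (coef i x * coef j x)\<bar> \<le> real (card Hi) * (h ^ (N + 1) * B\<^sup>2)" .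
    have "\<bar>h ^ (N + 1) * coef' N x\<bar> \<le> h ^ (N + 1) * B" using B h by (simp add: abs_mult mult_left_mono)
    then show ?thesis using pairs unfolding residual_def Hi_def[symmetric] by (simp add: abs_le_iff algebra_simps)
  qed
  then show thesis using that by blast
qed

lemma approx_eventually_ge:
  obtains a where "0 < a" "\<forall>\<^sub>F h in at_right 0. \<forall>x. a \<le> approx h x"
proof -
  obtain B where B: "\<And>j x. j \<le> N \<Longrightarrow> \<bar>coef j x\<bar> \<le> B \<and> \<bar>coef' j x\<bar> \<le> B"
    using coef_bounded by blast
  obtain xm where xm: "\<And>x. momentum level xm \<le> momentum level x"
    using periodic1_attains_min[OF momentum_continuous momentum_periodic] by blast
  define a where "a = momentum level xm / 2"
  have a: "0 < a" unfolding a_def using momentum_level_pos by simp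
  have "((\<lambda>h. B * (\<Sum>j=1..N. h ^ j)) \<longlongrightarrow> B * (\<Sum>j=1..N. 0 ^ j)) (at_right (0::real))"
    by (intro tendsto_intros)
  moreover have "(\<Sum>j=1..N. (0::real) ^ j) = 0" by (rule sum.neutral) simp
  ultimately have "\<forall>\<^sub>F h in at_right 0. B * (\<Sum>j=1..N. h ^ j) < a"
    using a by (intro order_tendstoD(2)) simp_all
  then have "\<forall>\<^sub>F h in at_right 0. \<forall>x. a \<le> approx h x"
    using eventually_at_right_real[OF zero_less_one]
  proof eventually_elim
    case (elim h)
    show ?case
    proof
      fix x
      have "{..N} = insert 0 {1..N}" by auto
      then have split: "approx h x = momentum level x + (\<Sum>j=1..N. h ^ j * coef j x)"
        unfolding approx_def by (simp add: sum.insert coef_def)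
      have "\<bar>\<Sum>j=1..N. h ^ j * coef j x\<bar> \<le> (\<Sum>j=1..N. h ^ j * B)"
        using elim B by (intro order_trans[OF sum_abs sum_mono]) (simp add: abs_mult mult_left_mono)
      also have "\<dots> = B * (\<Sum>j=1..N. h ^ j)" by (simp add: sum_distrib_left mult.commute)
      finally show "a \<le> approx h x"
        using split xm[of x] elim unfolding a_def abs_le_iff by linarith
    qed
  qed
  then show thesis using that a by blast
qed

lemma viscous_solution_close_to_approx:
  assumes h: "0 < h" and a: "0 < a" "\<And>x. a \<le> approx h x"
    and res: "\<And>x. \<bar>residual h x\<bar> \<le> \<delta>"
    and above: "Vmax < level + (\<Sum>k=1..N. h ^ k * Hbar_j V P v k) - \<delta>"
    and f: "periodic1 f" "\<And>x. (f has_real_derivative deriv f x) (at x)"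
      "\<And>x. (deriv f has_real_derivative deriv (deriv f) x) (at x)"
      "\<And>x. - (h / 2) * deriv (deriv f) x + (P + deriv f x)\<^sup>2 / 2 + V x = c"
  shows "\<bar>deriv f x - deriv (vhat v N h) x\<bar> \<le> 4 * \<delta> / a"
proof -
  define S where "S = (\<Sum>k=1..N. h ^ k * Hbar_j V P v k)"
  have "tint (deriv f) = 0" by (rule tint_deriv_periodic[OF f(1,2) DERIV_continuous_on_UNIV[OF f(3)]])
  then have mean: "tint (\<lambda>x. P + deriv f x) = P"
    using tint_add[OF continuous_on_const DERIV_continuous_on_UNIV[OF f(3)]] by simp
  interpret riccati_pair V "\<lambda>x. P + deriv f x" "deriv (deriv f)" "approx h" "approx' h"
    "\<lambda>x. level + S + residual h x" h c
  proof
    show "((\<lambda>x. P + deriv f x) has_real_derivative deriv (deriv f) x) (at x)" for x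
      using DERIV_add[OF DERIV_const f(3)] by simp
    show "periodic1 (\<lambda>x. P + deriv f x)" using periodic1_deriv[OF f(1)] by (simp add: periodic1_def)
  qed (use f(4) approx_has_derivative approx_periodic approx_eq mean tint_approx in \<open>simp_all add: S_def\<close>)
  have E: "\<bar>level + S + residual h x - (level + S)\<bar> \<le> \<delta>" for x using res by simp
  have "level + S - \<delta> \<le> c"
    by (rule level_lower_bound[OF _ E]) (use a in \<open>meson less_imp_le order_trans\<close>)
  then have "V x < c" for x using above V_le_Vmax[of x] unfolding S_def by linarith
  then have "0 < P + deriv f x" for x using positive[OF h] mean P_pos by simp
  then have "\<bar>P + deriv f x - approx h x\<bar> \<le> 4 * \<delta> / a" using difference_bound[OF a _ E] by blast
  then show ?thesis unfolding deriv_vhat by (simp add: algebra_simps)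
qed

lemma viscous_derivative_error:
  fixes f :: "real \<Rightarrow> real \<Rightarrow> real"
  assumes f_reg: "\<forall>h>0. (\<forall>x. (f h has_real_derivative deriv (f h) x) (at x)) \<and>
                        (\<forall>x. (deriv (f h) has_real_derivative deriv (deriv (f h)) x) (at x))"
    and f_per: "\<forall>h>0. periodic1 (f h)"
    and f_eq: "\<forall>h>0. \<exists>c. \<forall>x. - (h / 2) * deriv (deriv (f h)) x + (P + deriv (f h) x)\<^sup>2 / 2 + V x = c"
  obtains C where "\<forall>\<^sub>F h in at_right 0. continuous_on UNIV (\<lambda>x. deriv (f h) x - deriv (vhat v N h) x)
      \<and> (\<forall>x. \<bar>deriv (f h) x - deriv (vhat v N h) x\<bar> \<le> C * h ^ (N + 1))"
proof -
  obtain K where K: "\<And>h x. 0 < h \<Longrightarrow> h \<le> 1 \<Longrightarrow> \<bar>residual h x\<bar> \<le> K * h ^ (N + 1)"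
    using residual_bound by blast
  obtain a where a: "0 < a" "\<forall>\<^sub>F h in at_right 0. \<forall>x. a \<le> approx h x"
    using approx_eventually_ge by blast
  have "((\<lambda>h. level + (\<Sum>k=1..N. h ^ k * Hbar_j V P v k) - K * h ^ (N + 1))
      \<longlongrightarrow> level + (\<Sum>k=1..N. 0 ^ k * Hbar_j V P v k) - K * 0 ^ (N + 1)) (at_right 0)"
    by (intro tendsto_intros)
  moreover have "(\<Sum>k=1..N. 0 ^ k * Hbar_j V P v k) = 0" by (rule sum.neutral) simp
  ultimately have "\<forall>\<^sub>F h in at_right 0.
      Vmax < level + (\<Sum>k=1..N. h ^ k * Hbar_j V P v k) - K * h ^ (N + 1)"
    using level_gt_Vmax by (intro order_tendstoD(1)) simp_all
  with a(2) eventually_at_right_real[OF zero_less_one]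
  have "\<forall>\<^sub>F h in at_right 0. continuous_on UNIV (\<lambda>x. deriv (f h) x - deriv (vhat v N h) x)
      \<and> (\<forall>x. \<bar>deriv (f h) x - deriv (vhat v N h) x\<bar> \<le> 4 * K / a * h ^ (N + 1))"
  proof eventually_elim
    case (elim h)
    then have h: "0 < h" "h \<le> 1" by simp_all
    have d2: "\<And>x. (deriv (f h) has_real_derivative deriv (deriv (f h)) x) (at x)"
      using f_reg h by blast
    obtain c where "\<And>x. - (h / 2) * deriv (deriv (f h)) x + (P + deriv (f h) x)\<^sup>2 / 2 + V x = c"
      using f_eq h by blast
    then have "\<bar>deriv (f h) x - deriv (vhat v N h) x\<bar> \<le> 4 * (K * h ^ (N + 1)) / a" for x
      using viscous_solution_close_to_approx[OF h(1) a(1)] elim K[OF h] f_reg f_per h d2 by blast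
    moreover have "continuous_on UNIV (\<lambda>x. deriv (f h) x - deriv (vhat v N h) x)"
      unfolding deriv_vhat
      by (intro continuous_intros DERIV_continuous_on_UNIV[OF d2]
          DERIV_continuous_on_UNIV[OF approx_has_derivative])
    ultimately show ?case by (simp add: mult_ac)
  qed
  then show thesis using that by blast
qed

end

theorem mainTheorem5:
  fixes V :: "real \<Rightarrow> real" and P :: real
    and vh :: "real \<Rightarrow> real \<Rightarrow> real" and v :: "nat \<Rightarrow> real \<Rightarrow> real" and N :: nat
  assumes V_smooth: "smooth V"
    and V_per: "periodic1 V"
    and V_sym: "\<forall>x. V (- x) = V x"
    and V_min: "\<forall>x\<in>{-1/2..<1/2}. x \<noteq> 0 \<longrightarrow> V 0 < V x"
    and V_nondeg: "(deriv ^^ 2) V 0 > 0"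
    and P_gt: "P > Pcrit V"
    and vh_reg: "\<forall>h>0. (\<forall>x. (vh h has_real_derivative deriv (vh h) x) (at x)) \<and>
                        (\<forall>x. (deriv (vh h) has_real_derivative deriv (deriv (vh h)) x) (at x))"
    and vh_per: "\<forall>h>0. periodic1 (vh h)"
    and vh_eq: "\<forall>h>0. \<exists>c. \<forall>x. - (h / 2) * deriv (deriv (vh h)) x
                              + (P + deriv (vh h) x)\<^sup>2 / 2 + V x = c"
    and v_0: "v 0 = v0 V P"
    and v_smooth: "\<forall>j\<ge>1. smooth (v j) \<and> periodic1 (v j)"
    and v_eq: "\<forall>j\<ge>1. \<forall>x. - (1/2) * deriv (deriv (v (j - 1))) x + pplus V P x * deriv (v j) x
                   + (1/2) * (\<Sum>i=1..j-1. deriv (v i) x * deriv (v (j - i)) x) = Hbar_j V P v j"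
  shows "(\<lambda>h. L2T (\<lambda>x. deriv (vh h) x - deriv (vhat v N h) x))
           \<in> O[at_right 0](\<lambda>h. h powr ((real N + 1) / 2))"
proof -
  have "V 0 < V (1/4)" using V_min by simp
  interpret corrector_hierarchy V P v N
  proof unfold_locales
    show "C1 V" by (rule smooth_imp_C1[OF V_smooth])
    then show "continuous_on UNIV V" by (rule C1_continuous_on)
    show "\<exists>x y. V x \<noteq> V y" using \<open>V 0 < V (1/4)\<close> by (metis less_irrefl)
  qed (fact V_per P_gt v_0 v_smooth v_eq)+
  obtain C where "\<forall>\<^sub>F h in at_right 0.
      continuous_on UNIV (\<lambda>x. deriv (vh h) x - deriv (vhat v N h) x)
      \<and> (\<forall>x. \<bar>deriv (vh h) x - deriv (vhat v N h) x\<bar> \<le> C * h ^ (N + 1))"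
    using viscous_derivative_error[OF vh_reg vh_per vh_eq] by blast
  then show ?thesis by (rule L2T_bigo_powr) simp
qed

end
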